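(* Let $y$ be a Lyndon word of length $n>1$ over a totally ordered alphabet. Run Algorithm LeftLyndonTree (described in the context) on $y$. Then the algorithm creates exactly the $n-1$ internal nodes of the left Lyndon tree $\mathrm{LLT}(y)$, and the order in which it creates them is the order of their associated prefixes under the infinite ordering $\prec$: if node $q$ is created before node $q'$, then the prefix associated with $q$ is $\prec$-smaller than the prefix associated with $q'$. Equivalently, listing the internal nodes in creation order lists the proper non-empty prefixes of $y$ in strictly $\prec$-increasing order.
   Context: Words are finite sequences $y=y[0]y[1]\cdots y[n-1]$ over a totally ordered alphabet. $y[i\,..\,j]$ denotes the factor $y[i]\cdots y[j]$. Lexicographic order $<$: $u<v$ if $u$ is a proper prefix of $v$, or $u=ras$, $v=rbt$ for words $r,s,t$ and letters $a<b$. Lyndon word: a non-empty word $w$ such that $w<v$ for every proper non-empty suffix $v$ of $w$. Infinite ordering: $u^\infty$ is the infinite word $uuu\cdots$, compared lexicographically. For non-empty words $u,v$, $u\prec v$ iff $u^\infty<v^\infty$, or $u^\infty=v^\infty$ and $|u|>|v|$. Left Lyndon tree $\mathrm{LLT}(y)$ of a Lyndon word $y$: if $|y|=1$ it is a single leaf; otherwise write $y=uv$ where $u$ is the longest proper prefix of $y$ that is a Lyndon word (then $v$ is a Lyndon word), and $\mathrm{LLT}(y)$ is a root whose left subtree is $\mathrm{LLT}(u)$ and right subtree is $\mathrm{LLT}(v)$. The leaves, read left to right, are identified with the positions $0,1,\dots,n-1$ of $y$. Each internal node spans a factor $y[s\,..\,t]$ whose left child spans $y[s\,..\,m]$ for some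 $m$ with $s\le m<t$; the prefix associated with this internal node is $y[0\,..\,m]$. This gives a bijection between internal nodes and proper non-empty prefixes of $y$. Algorithm LeftLyndonTree (input: Lyndon word $y$ of length $n$; arrays lyns, root indexed by positions; internal nodes are fresh identifiers $\ge n$ with left and right child pointers): lyns[0] ← 1; root[0] ← 0; per ← 1; i ← 0. For j = 1 to n−1: root[j] ← j; if y[j] ≠ y[i] then { lyns[j] ← j+1; per ← j+1; i ← 0 } else { lyns[j] ← lyns[i]; i ← (i+1) mod per }; ℓ ← 1; k ← j−1; while ℓ < lyns[j]: { create a new internal node q with left child root[k] and right child root[j]; root[j] ← q; ℓ ← ℓ + lyns[k]; k ← k − lyns[k] }. Return root[n−1] (the root of the constructed binary tree). *)

theory Defs
  imports "HOL-Library.While_Combinator"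
begin

definition lexless :: "'a::linorder list \<Rightarrow> 'a list \<Rightarrow> bool" where
  "lexless u v \<longleftrightarrow>
     (\<exists>w. w \<noteq> [] \<and> v = u @ w) \<or>
     (\<exists>r a b s t. a < b \<and> u = r @ a # s \<and> v = r @ b # t)"

definition lyndon :: "'a::linorder list \<Rightarrow> bool" where
  "lyndon w \<longleftrightarrow> w \<noteq> [] \<and> (\<forall>k. 0 < k \<and> k < length w \<longrightarrow> lexless w (drop k w))"

definition pow_inf :: "'a list \<Rightarrow> nat \<Rightarrow> 'a" where
  "pow_inf u i = u ! (i mod length u)"

definition inf_lexless :: "(nat \<Rightarrow> 'a::linorder) \<Rightarrow> (nat \<Rightarrow> 'a) \<Rightarrow> bool" where
  "inf_lexless f g \<longleftrightarrow> (\<exists>k. (\<forall>i<k. f i = g i) \<and> f k < g k)"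

definition inf_prec :: "'a::linorder list \<Rightarrow> 'a list \<Rightarrow> bool" where
  "inf_prec u v \<longleftrightarrow> inf_lexless (pow_inf u) (pow_inf v) \<or>
                      (pow_inf u = pow_inf v \<and> length u > length v)"

text \<open>Binary trees whose leaves carry positions of y; internal nodes carry no data.\<close>
datatype tree = Leaf nat | Node tree tree

definition llp :: "'a::linorder list \<Rightarrow> nat" where
  "llp w = (GREATEST m. 0 < m \<and> m < length w \<and> lyndon (take m w))"

text \<open>llt_at w s: the left Lyndon tree of the factor w, whose first letter sits at
  position s of the whole word (so leaves are labelled by positions of y).\<close>
function llt_at :: "'a::linorder list \<Rightarrow> nat \<Rightarrow> tree" where
  "llt_at w s =
     (if length w \<le> 1 then Leaf s
      else (let m = llp w in
            if 0 < m \<and> m < length w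
            then Node (llt_at (take m w) s) (llt_at (drop m w) (s + m))
            else Leaf s))"
  by pat_completeness auto
termination
  by (relation "measure (\<lambda>(w, s). length w)") auto

definition LLT :: "'a::linorder list \<Rightarrow> tree" where
  "LLT y = llt_at y 0"

record alg_state =
  lyns :: "nat \<Rightarrow> nat"
  root :: "nat \<Rightarrow> nat"
  per :: nat
  idx :: nat
  lchild :: "nat \<Rightarrow> nat"
  rchild :: "nat \<Rightarrow> nat"
  fresh :: nat
  created :: "nat list"

definition inner_step :: "nat \<Rightarrow> alg_state \<times> nat \<times> nat \<Rightarrow> alg_state \<times> nat \<times> nat" where
  "inner_step j = (\<lambda>(s, l, k).
     (let q = fresh s in
      (s\<lparr> lchild := (lchild s)(q := root s k),
          rchild := (rchild s)(q := root s j),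
          root := (root s)(j := q),
          fresh := Suc q,
          created := created s @ [q] \<rparr>,
       l + lyns s k, k - lyns s k)))"

definition inner_loop :: "nat \<Rightarrow> alg_state \<Rightarrow> alg_state option" where
  "inner_loop j s =
     map_option fst
       (while_option (\<lambda>(s, l, k). l < lyns s j) (inner_step j) (s, 1, j - 1))"

definition outer_step :: "'a list \<Rightarrow> nat \<Rightarrow> alg_state \<Rightarrow> alg_state option" where
  "outer_step y j s =
     (let s1 = s\<lparr> root := (root s)(j := j) \<rparr>;
          s2 = (if y ! j \<noteq> y ! idx s1
                then s1\<lparr> lyns := (lyns s1)(j := Suc j), per := Suc j, idx := 0 \<rparr>
                else s1\<lparr> lyns := (lyns s1)(j := lyns s1 (idx s1)),
                         idx := (Suc (idx s1)) mod per s1 \<rparr>)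
      in inner_loop j s2)"

definition init_state :: "nat \<Rightarrow> alg_state" where
  "init_state n = \<lparr> lyns = (\<lambda>_. 0)(0 := 1), root = (\<lambda>_. 0), per = 1, idx = 0,
                    lchild = (\<lambda>_. 0), rchild = (\<lambda>_. 0), fresh = n, created = [] \<rparr>"

text \<open>Run of the algorithm on y; None if some inner loop does not terminate.
  The returned root is root (n-1) of the final state.\<close>
definition left_lyndon_tree_alg :: "'a list \<Rightarrow> alg_state option" where
  "left_lyndon_tree_alg y =
     fold (\<lambda>j so. Option.bind so (outer_step y j)) [1..<length y]
          (Some (init_state (length y)))"

text \<open>represents s n q t: identifier q denotes the tree t in the pointer structure
  of state s (identifiers < n are leaves = positions).\<close>
inductive represents :: "alg_state \<Rightarrow> nat \<Rightarrow> nat \<Rightarrow> tree \<Rightarrow> bool" where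
  leaf: "q < n \<Longrightarrow> represents s n q (Leaf q)"
| node: "n \<le> q \<Longrightarrow> represents s n (lchild s q) t1 \<Longrightarrow> represents s n (rchild s q) t2
         \<Longrightarrow> represents s n q (Node t1 t2)"

inductive reach :: "alg_state \<Rightarrow> nat \<Rightarrow> nat \<Rightarrow> nat \<Rightarrow> bool" where
  self: "reach s n r r"
| left: "reach s n r q \<Longrightarrow> n \<le> q \<Longrightarrow> reach s n r (lchild s q)"
| right: "reach s n r q \<Longrightarrow> n \<le> q \<Longrightarrow> reach s n r (rchild s q)"

fun rightmost_leaf :: "tree \<Rightarrow> nat" where
  "rightmost_leaf (Leaf p) = p"
| "rightmost_leaf (Node l r) = rightmost_leaf r"

definition assoc_prefix :: "'a list \<Rightarrow> alg_state \<Rightarrow> nat \<Rightarrow> 'a list" where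
  "assoc_prefix y s q =
     take (Suc (rightmost_leaf (THE t. represents s (length y) (lchild s q) t))) y"

end

theory Submission
  imports Defs
begin

text \<open>The algorithm runs Duval's scan, which finds the length of the longest Lyndon factor ending
  at each position \<open>j\<close>, and keeps a stack of left Lyndon trees for the Lyndon factorization of
  \<open>y[0..j]\<close>.  In iteration \<open>j\<close> the leaf \<open>j\<close> absorbs trees from the stack until it spans the
  longest Lyndon factor ending at \<open>j\<close>; absorbing the tree that ends at \<open>b - 1\<close> creates the node
  with associated prefix \<open>y[0..b)\<close>, and \<open>b\<close> is then a period of \<open>y[0..j)\<close> that breaks at \<open>j\<close>.
  In a Lyndon word the breaking letter is the larger one, so the infinite powers of these prefixes
  grow with \<open>j\<close>; within one iteration the periods shrink, and a prefix extending a shorter period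
  is \<open>\<prec>\<close>-smaller than it.  Hence nodes appear in \<open>\<prec>\<close>-increasing order, and since the final
  tree is \<open>LLT y\<close>, every proper prefix is associated with exactly one of them.\<close>

section \<open>Lyndon words\<close>

lemma lexless_iff_lexordp: "lexless u v \<longleftrightarrow> ord_class.lexordp u v"
  unfolding lexless_def lexordp_iff
  by (metis append_Cons append_Nil2 neq_Nil_conv)

lemma not_lexordp_iff_lexordp_eq:
  fixes u v :: "'a::linorder list"
  shows "\<not> ord_class.lexordp u v \<longleftrightarrow> ord_class.lexordp_eq v u"
  using lexordp_conv_lexordp_eq lexordp_eq_linear by blast

lemma lexordp_nthI:
  fixes u v :: "'a::linorder list"
  assumes "i < length u" "i < length v" "\<forall>t<i. u!t = v!t" "u!i < v!i"
  shows "ord_class.lexordp u v"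
proof -
  have "take i u = take i v" using assms by (intro nth_equalityI) auto
  moreover have "u = take i u @ u!i # drop (Suc i) u" using assms(1) by (simp add: id_take_nth_drop)
  moreover have "v = take i v @ v!i # drop (Suc i) v" using assms(2) by (simp add: id_take_nth_drop)
  ultimately show ?thesis using assms(4) by (metis lexordp_append_left_rightI)
qed

lemma lexordp_append_mismatch:
  fixes u v :: "'a::linorder list"
  assumes "ord_class.lexordp u v" "length v \<le> length u"
  shows "ord_class.lexordp (u @ w) (v @ w')"
proof -
  obtain us a b vs ws where "a < b" "u = us @ a # vs" "v = us @ b # ws"
    using assms by (auto simp: lexordp_iff)
  then show ?thesis by (simp add: lexordp_append_left_rightI)
qed

lemma lyndon_lexordp_drop:
  "lyndon w \<Longrightarrow> 0 < k \<Longrightarrow> k < length w \<Longrightarrow> ord_class.lexordp w (drop k w)"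
  by (simp add: lyndon_def lexless_iff_lexordp)

lemma lyndon_not_Nil: "lyndon w \<Longrightarrow> w \<noteq> []"
  by (simp add: lyndon_def)

lemma lyndon_singleton: "lyndon [a]"
  by (simp add: lyndon_def)

lemma lyndon_drop_neq_take:
  fixes w :: "'a::linorder list"
  assumes "lyndon w" "0 < k" "k < length w"
  shows "drop k w \<noteq> take (length w - k) w"
proof
  assume "drop k w = take (length w - k) w"
  moreover have "ord_class.lexordp w (drop k w)" using assms by (rule lyndon_lexordp_drop)
  ultimately have "ord_class.lexordp (take (length w - k) w @ drop (length w - k) w) (take (length w - k) w)"
    by simp
  thus False using lexordp_conv_lexordp_eq lexordp_eq_pref by blast
qed

lemma lyndon_append_suffixI:
  fixes u v :: "'a::linorder list"
  assumes "u \<noteq> []" "lyndon v" "ord_class.lexordp (u @ v) v"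
    and "\<And>k. 0 < k \<Longrightarrow> k < length u \<Longrightarrow> ord_class.lexordp (u @ v) (drop k u @ v)"
  shows "lyndon (u @ v)"
  unfolding lyndon_def lexless_iff_lexordp
proof (intro conjI allI impI)
  show "u @ v \<noteq> []" using assms(1) by simp
  fix k assume k: "0 < k \<and> k < length (u @ v)"
  consider "k < length u" | "k = length u" | "length u < k" by linarith
  then show "ord_class.lexordp (u @ v) (drop k (u @ v))"
  proof cases
    case 1 thus ?thesis using assms(4) k by simp
  next
    case 2 thus ?thesis using assms(3) by simp
  next
    case 3
    have "ord_class.lexordp v (drop (k - length u) v)"
      using assms(2) 3 k by (intro lyndon_lexordp_drop) auto
    thus ?thesis using assms(3) 3 lexordp_trans by fastforce
  qed
qed

lemma lexordp_append_lyndon: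
  fixes u v :: "'a::linorder list"
  assumes "lyndon u" "lyndon v" "ord_class.lexordp u v"
  shows "ord_class.lexordp (u @ v) v"
proof -
  from assms(3) consider x vs where "v = u @ x # vs"
    | us a b vs ws where "a < b" "u = us @ a # vs" "v = us @ b # ws"
    by (auto simp: lexordp_iff)
  then show ?thesis
  proof cases
    case 1
    have "ord_class.lexordp v (drop (length u) v)"
      using assms 1 lyndon_not_Nil by (intro lyndon_lexordp_drop) auto
    hence "ord_class.lexordp (u @ v) (u @ drop (length u) v)" by (rule lexordp_append_leftI)
    thus ?thesis using 1 by simp
  next
    case 2 thus ?thesis by (simp add: lexordp_append_left_rightI)
  qed
qed

lemma lyndon_append:
  fixes u v :: "'a::linorder list"
  assumes "lyndon u" "lyndon v" "ord_class.lexordp u v"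
  shows "lyndon (u @ v)"
proof (rule lyndon_append_suffixI)
  show "u \<noteq> []" using assms(1) by (rule lyndon_not_Nil)
  show "ord_class.lexordp (u @ v) v" using assms by (rule lexordp_append_lyndon)
  fix k assume "0 < k" "k < length u"
  hence "ord_class.lexordp u (drop k u)" using assms(1) by (intro lyndon_lexordp_drop)
  thus "ord_class.lexordp (u @ v) (drop k u @ v)" by (rule lexordp_append_mismatch) simp
qed (fact assms(2))

lemma lyndon_overlap_append:
  fixes x t z :: "'a::linorder list"
  assumes "lyndon (x @ t)" "lyndon (t @ z)" "x \<noteq> []" "t \<noteq> []"
  shows "lyndon (x @ t @ z)"
proof (rule lyndon_append_suffixI)
  have "ord_class.lexordp (x @ t) (drop (length x) (x @ t))"
    using assms by (intro lyndon_lexordp_drop) auto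
  thus "ord_class.lexordp (x @ t @ z) (t @ z)"
    using lexordp_append_mismatch[of "x @ t" t z z] by simp
  fix k assume "0 < k" "k < length x"
  hence "ord_class.lexordp (x @ t) (drop k (x @ t))" using assms(1) by (intro lyndon_lexordp_drop) auto
  hence "ord_class.lexordp ((x @ t) @ z) (drop k (x @ t) @ z)" by (rule lexordp_append_mismatch) simp
  thus "ord_class.lexordp (x @ t @ z) (drop k x @ t @ z)" using \<open>k < length x\<close> by simp
qed (use assms in auto)

section \<open>Periods and infinite powers\<close>

definition periodic_upto :: "'a list \<Rightarrow> nat \<Rightarrow> nat \<Rightarrow> bool" where
  "periodic_upto y m j \<longleftrightarrow> (\<forall>i<j. y!i = y!(i mod m))"

definition has_period :: "'a list \<Rightarrow> nat \<Rightarrow> nat \<Rightarrow> bool" where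
  "has_period y b j \<longleftrightarrow> (\<forall>t. b + t < j \<longrightarrow> y!(b+t) = y!t)"

lemma has_period_imp_periodic_upto:
  assumes "0 < b" "has_period y b j"
  shows "periodic_upto y b j"
  unfolding periodic_upto_def
proof (intro allI impI)
  fix i show "i < j \<Longrightarrow> y!i = y!(i mod b)"
  proof (induction i rule: less_induct)
    case (less i)
    show ?case
    proof (cases "i < b")
      case False
      have "b + (i - b) < j" using less.prems False by simp
      hence "y!(b + (i - b)) = y!(i - b)" using assms(2) unfolding has_period_def by blast
      hence "y!i = y!(i - b)" using False by simp
      also have "\<dots> = y!((i - b) mod b)" using less.IH[of "i - b"] less.prems False assms(1) by simp
      finally show ?thesis using False by (simp add: le_mod_geq)
    qed simp
  qed
qed

lemma periodic_upto_nth_eq: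
  "periodic_upto y m j \<Longrightarrow> i < j \<Longrightarrow> i' < j \<Longrightarrow> i mod m = i' mod m \<Longrightarrow> y!i = y!i'"
  unfolding periodic_upto_def by (metis (no_types))

lemma periodic_upto_mono: "periodic_upto y m j \<Longrightarrow> j' \<le> j \<Longrightarrow> periodic_upto y m j'"
  unfolding periodic_upto_def by auto

lemma periodic_upto_nth_minus:
  assumes "periodic_upto y m j" "0 < m" "m \<le> j"
  shows "y!(j - m) = y!(j mod m)"
proof -
  have "j mod m < m" using assms(2) by simp
  hence "j mod m < j" using assms(3) by linarith
  moreover have "(j - m) mod m = j mod m" using assms(3) by (simp add: le_mod_geq)
  ultimately show ?thesis using periodic_upto_nth_eq[OF assms(1), of "j - m" "j mod m"] assms by simp
qed

lemma lyndon_first_mismatch: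
  fixes y :: "'a::linorder list"
  assumes "lyndon y" "0 < s" "s < length y"
  obtains i where "s + i < length y" "\<forall>t<i. y!t = y!(s+t)" "y!i < y!(s+i)"
proof -
  have "ord_class.lexordp y (drop s y)" using assms by (rule lyndon_lexordp_drop)
  moreover have "drop s y \<noteq> y @ x # vs" for x vs
  proof
    assume "drop s y = y @ x # vs"
    hence "length (drop s y) = length (y @ x # vs)" by simp
    thus False by simp
  qed
  ultimately obtain us a b vs ws where h: "a < b" "y = us @ a # vs" "drop s y = us @ b # ws"
    by (auto simp: lexordp_iff)
  let ?i = "length us"
  have len: "?i < length (drop s y)" using h(3) by simp
  have "y!t = y!(s+t)" if "t < ?i" for t
  proof -
    have "y!t = us!t" "drop s y ! t = us!t" using h that by (simp_all add: nth_append)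
    thus ?thesis using len that by simp
  qed
  moreover have "y!?i = a" using h(2) by simp
  moreover have "drop s y ! ?i = b" using h(3) by simp
  hence "y!(s+?i) = b" using len by simp
  ultimately show ?thesis using len h(1) by (intro that[of ?i]) auto
qed

lemma lyndon_mismatch_less:
  fixes y :: "'a::linorder list"
  assumes "lyndon y" "0 < s" "s + i < length y" "\<forall>t<i. y!t = y!(s+t)" "y!i \<noteq> y!(s+i)"
  shows "y!i < y!(s+i)"
proof -
  have "s < length y" using assms(3) by simp
  then obtain i0 where h: "\<forall>t<i0. y!t = y!(s+t)" "y!i0 < y!(s+i0)"
    using lyndon_first_mismatch[OF assms(1,2)] by blast
  have "i0 = i"
  proof (rule ccontr)
    assume "i0 \<noteq> i"
    then consider "i0 < i" | "i < i0" by linarith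
    thus False
    proof cases
      case 1 thus False using h(2) assms(4) by (metis less_irrefl)
    next
      case 2 thus False using h(1) assms(5) by blast
    qed
  qed
  thus ?thesis using h(2) by simp
qed

lemma periodic_upto_break_less:
  fixes y :: "'a::linorder list"
  assumes "lyndon y" "0 < m" "d < length y" "periodic_upto y m d" "y!d \<noteq> y!(d mod m)"
  shows "y!(d mod m) < y!d"
proof -
  have "m \<le> d" using assms(5) by (cases "d < m") auto
  define s where "s = m * (d div m)"
  have "0 < s" unfolding s_def using \<open>m \<le> d\<close> assms(2) by (simp add: div_greater_zero_iff)
  have sd: "s + d mod m = d" unfolding s_def by simp
  have "y!t = y!(s+t)" if t: "t < d mod m" for t
  proof -
    have "d mod m < m" using assms(2) by simp
    hence "t < m" using t by linarith
    have "s + t < d" using sd t by simp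
    hence "y!(s+t) = y!((s+t) mod m)" using assms(4) unfolding periodic_upto_def by blast
    also have "(s+t) mod m = t" using \<open>t < m\<close> unfolding s_def by simp
    finally show ?thesis by simp
  qed
  thus ?thesis using lyndon_mismatch_less[OF assms(1) \<open>0 < s\<close>, of "d mod m"] sd assms by auto
qed

lemma pow_inf_take:
  "0 < m \<Longrightarrow> m \<le> length y \<Longrightarrow> pow_inf (take m y) i = y!(i mod m)"
  unfolding pow_inf_def by (simp add: min_def)

lemma inf_lexless_asym: "inf_lexless f g \<Longrightarrow> \<not> inf_lexless g f"
proof
  assume "inf_lexless f g" "inf_lexless g f"
  then obtain k1 k2 where a: "\<forall>i<k1. f i = g i" "f k1 < g k1" and b: "\<forall>i<k2. g i = f i" "g k2 < f k2"
    unfolding inf_lexless_def by blast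
  consider "k1 < k2" | "k1 = k2" | "k2 < k1" by linarith
  thus False using a b by cases (auto dest: spec[of _ k1] spec[of _ k2])
qed

lemma inf_lexless_irrefl: "\<not> inf_lexless f f"
  unfolding inf_lexless_def by auto

lemma inf_prec_asym: "inf_prec u v \<Longrightarrow> \<not> inf_prec v u"
  unfolding inf_prec_def using inf_lexless_asym inf_lexless_irrefl by fastforce

lemma inf_prec_irrefl: "\<not> inf_prec u u"
  unfolding inf_prec_def using inf_lexless_irrefl by fastforce

lemma inf_lexless_pow_inf_take_break:
  fixes y :: "'a::linorder list"
  assumes "lyndon y" "0 < a" "0 < b" "a \<le> length y" "b \<le> length y" "d < length y"
    "periodic_upto y a d" "y!d \<noteq> y!(d mod a)" "periodic_upto y b (Suc d)"
  shows "inf_lexless (pow_inf (take a y)) (pow_inf (take b y))"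
  unfolding inf_lexless_def
proof (intro exI[of _ d] conjI allI impI)
  fix i assume "i < d"
  thus "pow_inf (take a y) i = pow_inf (take b y) i"
    using assms by (simp add: pow_inf_take periodic_upto_def)
next
  have "y!(d mod a) < y!d" using periodic_upto_break_less assms by blast
  moreover have "y!d = y!(d mod b)" using assms(9) unfolding periodic_upto_def by simp
  ultimately show "pow_inf (take a y) d < pow_inf (take b y) d"
    using assms by (simp add: pow_inf_take)
qed

lemma pow_inf_take_eq_of_periodic:
  assumes "0 < B" "B < A" "A \<le> j" "j \<le> length y"
    "periodic_upto y B j" "periodic_upto y (A - B) j"
  shows "pow_inf (take A y) = pow_inf (take B y)"
proof -
  define X where "X i = y!(i mod B)" for i
  define e where "e = A - B"
  have Ae: "A = B + e" using assms unfolding e_def by simp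
  have Xy: "X i = y!i" if "i < j" for i using assms(5) that unfolding periodic_upto_def X_def by simp
  have XB: "X i = X (i - B)" if "B \<le> i" for i using that unfolding X_def by (simp add: le_mod_geq)
  have Xe: "X (t + e) = X t" for t
  proof (induction t rule: less_induct)
    case (less t)
    show ?case
    proof (cases "t + e < j")
      case True
      thus ?thesis using Xy periodic_upto_nth_eq[OF assms(6)[folded e_def], of "t + e" t] by simp
    next
      case False
      hence "B \<le> t" using Ae assms by simp
      have "X (t + e) = X ((t - B) + e)" using XB[of "t + e"] \<open>B \<le> t\<close> by (simp add: add.commute)
      also have "\<dots> = X (t - B)" using less.IH[of "t - B"] assms \<open>B \<le> t\<close> by simp
      finally show ?thesis using XB \<open>B \<le> t\<close> by simp
    qed
  qed
  have "y!(i mod A) = X i" for i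
  proof (induction i rule: less_induct)
    case (less i)
    show ?case
    proof (cases "i < A")
      case True thus ?thesis using Xy assms(3) by simp
    next
      case False
      have "y!(i mod A) = y!((i - A) mod A)" using False by (simp add: le_mod_geq)
      also have "\<dots> = X (i - A)" using less.IH[of "i - A"] False assms by simp
      also have "\<dots> = X (i - A + e)" by (rule Xe[symmetric])
      also have "i - A + e = i - B" using False Ae by simp
      finally show ?thesis using XB False Ae by simp
    qed
  qed
  thus ?thesis using assms by (auto simp: pow_inf_take X_def)
qed

lemma inf_lexless_take_of_break:
  fixes y :: "'a::linorder list"
  assumes "lyndon y" "0 < B" "B < A" "A \<le> j" "j \<le> length y" "periodic_upto y B j"
    "d < j" "periodic_upto y (A - B) d" "y!d \<noteq> y!(d mod (A - B))"
  shows "inf_lexless (pow_inf (take A y)) (pow_inf (take B y))"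
proof -
  define X where "X i = y!(i mod B)" for i
  define Z where "Z i = y!(i mod A)" for i
  define e where "e = A - B"
  have e0: "0 < e" and Ae: "A = B + e" using assms unfolding e_def by auto
  note pe = assms(8)[folded e_def] and d = assms(7) assms(9)[folded e_def]
  have Xy: "X i = y!i" if "i < j" for i using assms(6) that unfolding periodic_upto_def X_def by simp
  have ZA: "Z i = Z (i - A)" if "A \<le> i" for i using that unfolding Z_def by (simp add: le_mod_geq)
  have XB: "X i = X (i - B)" if "B \<le> i" for i using that unfolding X_def by (simp add: le_mod_geq)
  have ed: "e \<le> d" using d(2) by (cases "d < e") auto
  have agree: "Z i = X i" if "i < B + d" for i
    using that
  proof (induction i rule: less_induct)
    case (less i)
    show ?case
    proof (cases "i < A")
      case True thus ?thesis using Xy assms(4) unfolding Z_def by simp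
    next
      case False
      have ib: "i - B = (i - A) + e" "i - B < d" using False less.prems Ae by auto
      have "Z i = X (i - A)" using ZA less.IH[of "i - A"] less.prems False assms by simp
      also have "\<dots> = y!(i - A)" using Xy False assms less.prems d by simp
      also have "\<dots> = y!(i - B)" using periodic_upto_nth_eq[OF pe, of "i - A" "i - B"] ib by simp
      also have "\<dots> = X i" using Xy XB less.prems d False assms by simp
      finally show ?thesis .
    qed
  qed
  have "Z (B + d) = Z (d - e)" using ZA[of "B + d"] Ae ed by simp
  also have "\<dots> = y!(d - e)"
  proof -
    have "d - e < B + d" "d - e < j" using d(1) assms(2) by linarith+
    thus ?thesis using agree Xy by simp
  qed
  also have "\<dots> = y!(d mod e)" using periodic_upto_nth_minus[OF pe e0 ed] .
  also have "\<dots> < y!d" using periodic_upto_break_less[OF assms(1) e0 _ pe d(2)] d assms by simp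
  also have "y!d = X (B + d)" using XB[of "B + d"] Xy d by simp
  finally have "inf_lexless Z X" unfolding inf_lexless_def using agree by blast
  moreover have "pow_inf (take A y) = Z" "pow_inf (take B y) = X"
    using assms by (auto simp: pow_inf_take X_def Z_def)
  ultimately show ?thesis by simp
qed

lemma inf_prec_take_periodic:
  fixes y :: "'a::linorder list"
  assumes "lyndon y" "0 < B" "B < A" "A \<le> j" "j \<le> length y" "periodic_upto y B j"
  shows "inf_prec (take A y) (take B y)"
proof (cases "\<exists>d<j. y!d \<noteq> y!(d mod (A - B))")
  case True
  define d where "d = (LEAST d. d < j \<and> y!d \<noteq> y!(d mod (A - B)))"
  have d: "d < j" "y!d \<noteq> y!(d mod (A - B))" using LeastI_ex[OF True] unfolding d_def by auto
  have "periodic_upto y (A - B) d"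
    unfolding periodic_upto_def using not_less_Least d(1) unfolding d_def by fastforce
  thus ?thesis using inf_lexless_take_of_break[OF assms d(1) _ d(2)] unfolding inf_prec_def by simp
next
  case False
  hence "periodic_upto y (A - B) j" unfolding periodic_upto_def by auto
  thus ?thesis using pow_inf_take_eq_of_periodic[of B A j y] assms unfolding inf_prec_def by simp
qed

section \<open>Maximal Lyndon factors\<close>

definition factor :: "'a list \<Rightarrow> nat \<Rightarrow> nat \<Rightarrow> 'a list" where
  "factor y i L = take L (drop i y)"

lemma factor_append: "factor y i a @ factor y (i + a) b = factor y i (a + b)"
  unfolding factor_def by (simp add: take_add add.commute)

lemma length_factor: "i + L \<le> length y \<Longrightarrow> length (factor y i L) = L"
  unfolding factor_def by simp

lemma nth_factor: "t < L \<Longrightarrow> i + L \<le> length y \<Longrightarrow> factor y i L ! t = y!(i+t)"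
  unfolding factor_def by simp

lemma drop_factor: "drop c (factor y i L) = factor y (i + c) (L - c)"
  unfolding factor_def by (simp add: drop_take add.commute)

lemma take_factor: "c \<le> L \<Longrightarrow> take c (factor y i L) = factor y i c"
  unfolding factor_def by (simp add: min_def)

lemma factor_0: "factor y 0 L = take L y"
  unfolding factor_def by simp

lemma factor_1: "i < length y \<Longrightarrow> factor y i 1 = [y!i]"
  unfolding factor_def by (simp add: take_Suc_conv_app_nth)

lemma factor_eqI:
  assumes "i + L \<le> length y" "i' + L \<le> length y" "\<And>t. t < L \<Longrightarrow> y!(i+t) = y!(i'+t)"
  shows "factor y i L = factor y i' L"
  using assms by (intro nth_equalityI) (auto simp: length_factor nth_factor)

lemma factor_eq_take_iff:
  "i + L \<le> length y \<Longrightarrow> factor y i L = take L y \<longleftrightarrow> (\<forall>t<L. y!(i+t) = y!t)"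
proof
  assume "i + L \<le> length y" "factor y i L = take L y"
  thus "\<forall>t<L. y!(i+t) = y!t" by (metis nth_factor nth_take)
next
  assume "i + L \<le> length y" "\<forall>t<L. y!(i+t) = y!t"
  thus "factor y i L = take L y"
    using factor_eqI[of i L y 0] by (simp add: factor_0)
qed

text \<open>\<open>lyn y p\<close> is the value the algorithm stores in \<open>lyns[p]\<close>.\<close>

definition lyn :: "'a::linorder list \<Rightarrow> nat \<Rightarrow> nat" where
  "lyn y p = (GREATEST L. 0 < L \<and> L \<le> Suc p \<and> lyndon (factor y (Suc p - L) L))"

definition lyn_start :: "'a::linorder list \<Rightarrow> nat \<Rightarrow> nat" where
  "lyn_start y p = Suc p - lyn y p"

abbreviation lyn_factor :: "'a::linorder list \<Rightarrow> nat \<Rightarrow> 'a list" where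
  "lyn_factor y p \<equiv> factor y (lyn_start y p) (lyn y p)"

lemma lyn_props:
  assumes "p < length y"
  shows "0 < lyn y p \<and> lyn y p \<le> Suc p \<and> lyndon (factor y (Suc p - lyn y p) (lyn y p))"
proof -
  have "factor y (Suc p - 1) 1 = [y!p]" using factor_1[of p y] assms by simp
  hence "lyndon (factor y (Suc p - 1) 1)" by (simp add: lyndon_singleton)
  hence "0 < (1::nat) \<and> 1 \<le> Suc p \<and> lyndon (factor y (Suc p - 1) 1)" by simp
  thus ?thesis unfolding lyn_def by (rule GreatestI_nat[where b = "Suc p"]) auto
qed

lemma lyn_start_add_lyn: "p < length y \<Longrightarrow> lyn_start y p + lyn y p = Suc p"
  using lyn_props[of p y] unfolding lyn_start_def by simp

lemma Suc_minus_lyn_start: "p < length y \<Longrightarrow> Suc p - lyn_start y p = lyn y p"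
  using lyn_start_add_lyn[of p y] by simp

lemma lyn_start_le: "p < length y \<Longrightarrow> lyn_start y p \<le> p"
  using lyn_props[of p y] unfolding lyn_start_def by arith

lemma lyn_pos: "p < length y \<Longrightarrow> 0 < lyn y p"
  using lyn_props[of p y] by simp

lemma lyndon_lyn_factor: "p < length y \<Longrightarrow> lyndon (lyn_factor y p)"
  using lyn_props[of p y] unfolding lyn_start_def by simp

lemma lyn_maximal:
  assumes "p < length y" "lyn y p < L" "L \<le> Suc p"
  shows "\<not> lyndon (factor y (Suc p - L) L)"
proof
  assume "lyndon (factor y (Suc p - L) L)"
  hence "L \<le> lyn y p" unfolding lyn_def
    using assms by (intro Greatest_le_nat[where b = "Suc p"]) auto
  thus False using assms by simp
qed

lemma lyn_eqI:
  assumes "0 < L" "L \<le> Suc p" "lyndon (factor y (Suc p - L) L)"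
    "\<And>L'. L < L' \<Longrightarrow> L' \<le> Suc p \<Longrightarrow> \<not> lyndon (factor y (Suc p - L') L')"
  shows "lyn y p = L"
  unfolding lyn_def
proof (rule Greatest_equality)
  show "0 < L \<and> L \<le> Suc p \<and> lyndon (factor y (Suc p - L) L)" using assms by simp
  fix L' assume "0 < L' \<and> L' \<le> Suc p \<and> lyndon (factor y (Suc p - L') L')"
  thus "L' \<le> L" using assms(4) by (metis not_le)
qed

lemma lyn_0: "0 < length y \<Longrightarrow> lyn y 0 = 1"
  by (rule lyn_eqI) (use factor_1[of 0 y] in \<open>auto simp: lyndon_singleton\<close>)

lemma lexordp_eq_take_factor:
  fixes y :: "'a::linorder list"
  assumes "lyndon y" "a + L \<le> length y"
  shows "ord_class.lexordp_eq (take L y) (factor y a L)"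
proof (cases "a = 0 \<or> L = 0")
  case True thus ?thesis by (auto simp: factor_0 lexordp_eq_refl)
next
  case False
  hence "0 < a" "a < length y" using assms by auto
  then obtain i where i: "a + i < length y" "\<forall>t<i. y!t = y!(a+t)" "y!i < y!(a+i)"
    using lyndon_first_mismatch[OF assms(1)] by blast
  show ?thesis
  proof (cases "i < L")
    case True
    have "ord_class.lexordp (take L y) (factor y a L)"
      using True i assms by (intro lexordp_nthI[of i]) (auto simp: length_factor nth_factor)
    thus ?thesis by (rule lexordp_into_lexordp_eq)
  next
    case False
    have "\<forall>t<L. y!(a+t) = y!t" using i(2) False by (metis less_le_trans not_less)
    hence "factor y a L = take L y" using assms by (simp add: factor_eq_take_iff)
    thus ?thesis by (simp add: lexordp_eq_refl)
  qed
qed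

lemma lyndon_factor_suffix_neq_take:
  fixes y :: "'a::linorder list"
  assumes "lyndon y" "lyndon (factor y a L)" "a + L \<le> length y" "0 < c" "c < L"
  shows "factor y (a + c) (L - c) \<noteq> take (L - c) y"
proof
  assume eq: "factor y (a + c) (L - c) = take (L - c) y"
  have "ord_class.lexordp (factor y a L) (drop c (factor y a L))"
    using assms by (intro lyndon_lexordp_drop) (auto simp: length_factor)
  hence less: "ord_class.lexordp (factor y a L) (take (L - c) y)" using eq by (simp add: drop_factor)
  have "take L y = take (L - c) y @ drop (L - c) (take L y)"
    by (metis append_take_drop_id diff_le_self min_def take_take)
  hence "ord_class.lexordp_eq (take (L - c) y) (take L y)" by (metis lexordp_eq_pref)
  moreover have "ord_class.lexordp_eq (take L y) (factor y a L)"
    using assms by (intro lexordp_eq_take_factor)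
  ultimately have "ord_class.lexordp_eq (take (L - c) y) (factor y a L)" by (rule lexordp_eq_trans)
  thus False using less lexordp_conv_lexordp_eq by blast
qed

declare lexordp_eq_trans [trans]

lemma lyn_start_mono:
  fixes y :: "'a::linorder list"
  assumes "p < q" "q < length y" "lyn_start y q \<le> p"
  shows "lyn_start y q \<le> lyn_start y p"
proof (rule ccontr)
  assume "\<not> lyn_start y q \<le> lyn_start y p"
  hence lt: "lyn_start y p < lyn_start y q" by simp
  have pn: "p < length y" using assms by simp
  define i where "i = lyn_start y p"
  have ip: "i + lyn y p = Suc p" using lyn_start_add_lyn[OF pn] unfolding i_def .
  have sq: "lyn_start y q + lyn y q = Suc q" using lyn_start_add_lyn[OF assms(2)] .
  define X where "X = factor y i (lyn_start y q - i)"
  define T where "T = factor y (lyn_start y q) (Suc p - lyn_start y q)"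
  define Z where "Z = factor y (Suc p) (q - p)"
  have "X @ T = lyn_factor y p"
    unfolding X_def T_def using factor_append[of y i "lyn_start y q - i" "Suc p - lyn_start y q"]
      lt ip assms i_def Suc_minus_lyn_start[OF pn] by (simp add: add.commute)
  moreover have "T @ Z = lyn_factor y q"
    unfolding T_def Z_def using factor_append[of y "lyn_start y q" "Suc p - lyn_start y q" "q - p"]
      Suc_minus_lyn_start[OF assms(2)] sq assms by simp
  moreover have "X \<noteq> []" "T \<noteq> []" unfolding X_def T_def using lt assms ip i_def by (simp_all add: factor_def)
  ultimately have "lyndon (X @ T @ Z)"
    using lyndon_overlap_append lyndon_lyn_factor[OF pn] lyndon_lyn_factor[OF assms(2)] by metis
  moreover have "X @ T @ Z = factor y (Suc q - (Suc q - i)) (Suc q - i)"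
    unfolding X_def T_def Z_def
    using factor_append[of y i "lyn_start y q - i" "(Suc p - lyn_start y q) + (q - p)"]
      factor_append[of y "lyn_start y q" "Suc p - lyn_start y q" "q - p"] lt assms ip i_def
    by (simp add: add.commute)
  moreover have "lyn y q < Suc q - i" using lt sq i_def by simp
  ultimately show False using lyn_maximal[OF assms(2), of "Suc q - i"] by simp
qed

text \<open>Otherwise two adjacent maximal Lyndon factors on the way from \<open>j\<close> down to \<open>e\<close> would
  merge into a longer Lyndon factor.\<close>

lemma lexordp_eq_lyn_factor:
  fixes y :: "'a::linorder list"
  assumes "j < length y" "lyn_start y j \<le> e" "e \<le> j"
  shows "ord_class.lexordp_eq (lyn_factor y e) (lyn_factor y j)"
  using assms(2,3)
proof (induction e rule: less_induct)
  case (less e)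
  show ?case
  proof (cases "e = j")
    case True thus ?thesis by (simp add: lexordp_eq_refl)
  next
    case False
    hence ej: "e < j" using less.prems by simp
    have en: "e < length y" using ej assms by simp
    have se: "lyn_start y j \<le> lyn_start y e" using lyn_start_mono[OF ej assms(1) less.prems(1)] .
    show ?thesis
    proof (cases "lyn_start y e = lyn_start y j")
      case True
      have "lyn y e \<le> lyn y j"
        using lyn_start_add_lyn[OF en] lyn_start_add_lyn[OF assms(1)] True ej by simp
      hence "take (lyn y e) (lyn_factor y j) = lyn_factor y e" using True by (simp add: take_factor)
      thus ?thesis by (metis append_take_drop_id lexordp_eq_pref)
    next
      case False
      hence sl: "lyn_start y j < lyn_start y e" using se by simp
      define e' where "e' = lyn_start y e - 1"
      have e': "lyn_start y j \<le> e'" "e' < e" using sl lyn_start_le[OF en] unfolding e'_def by auto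
      have e'n: "e' < length y" using e' en by simp
      have adj: "lyn_start y e' + lyn y e' = lyn_start y e"
        using lyn_start_add_lyn[OF e'n] sl unfolding e'_def by simp
      have "\<not> ord_class.lexordp (lyn_factor y e') (lyn_factor y e)"
      proof
        assume "ord_class.lexordp (lyn_factor y e') (lyn_factor y e)"
        hence "lyndon (lyn_factor y e' @ lyn_factor y e)"
          using lyndon_append lyndon_lyn_factor[OF e'n] lyndon_lyn_factor[OF en] by blast
        moreover have "Suc e - (lyn y e' + lyn y e) = lyn_start y e'"
          using adj lyn_start_add_lyn[OF en] by simp
        ultimately have "lyndon (factor y (Suc e - (lyn y e' + lyn y e)) (lyn y e' + lyn y e))"
          using adj lyn_start_add_lyn[OF en] factor_append[of y "lyn_start y e'" "lyn y e'" "lyn y e"]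
          by simp
        moreover have "lyn y e < lyn y e' + lyn y e" using lyn_pos[OF e'n] by simp
        moreover have "lyn y e' + lyn y e \<le> Suc e" using adj lyn_start_add_lyn[OF en] by simp
        ultimately show False using lyn_maximal[OF en] by blast
      qed
      hence "ord_class.lexordp_eq (lyn_factor y e) (lyn_factor y e')"
        by (simp add: not_lexordp_iff_lexordp_eq)
      also have "ord_class.lexordp_eq (lyn_factor y e') (lyn_factor y j)"
        using less.IH[OF e'(2) e'(1)] e' less.prems by simp
      finally show ?thesis .
    qed
  qed
qed

lemma lexordp_lyn_factor_factor:
  fixes y :: "'a::linorder list"
  assumes "j < length y" "lyn_start y j < b" "b \<le> j"
  shows "ord_class.lexordp (lyn_factor y (b - 1)) (factor y b (Suc j - b))"
proof (rule ccontr)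
  let ?u = "lyn_factor y (b - 1)" and ?v = "factor y b (Suc j - b)"
  assume "\<not> ord_class.lexordp ?u ?v"
  hence "ord_class.lexordp_eq ?v ?u" by (simp add: not_lexordp_iff_lexordp_eq)
  also have "ord_class.lexordp_eq ?u (lyn_factor y j)"
    using lexordp_eq_lyn_factor[OF assms(1), of "b - 1"] assms by simp
  finally have "ord_class.lexordp_eq ?v (lyn_factor y j)" .
  moreover have "ord_class.lexordp (lyn_factor y j) (drop (b - lyn_start y j) (lyn_factor y j))"
    using lyndon_lyn_factor[OF assms(1)] assms lyn_start_add_lyn[OF assms(1)]
    by (intro lyndon_lexordp_drop) (auto simp: length_factor)
  moreover have "drop (b - lyn_start y j) (lyn_factor y j) = ?v"
  proof -
    have "lyn_start y j + (b - lyn_start y j) = b" "lyn y j - (b - lyn_start y j) = Suc j - b"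
      using assms lyn_start_add_lyn[OF assms(1)] by arith+
    thus ?thesis by (simp add: drop_factor)
  qed
  ultimately show False using lexordp_conv_lexordp_eq by fastforce
qed

definition period_break :: "'a list \<Rightarrow> nat \<Rightarrow> nat \<Rightarrow> bool" where
  "period_break y b j \<longleftrightarrow> has_period y b j \<and> y!j \<noteq> y!(j - b)"

lemma lyn_start_less_period_break:
  fixes y :: "'a::linorder list"
  assumes "lyndon y" "j < length y" "lyn_start y j < s" "s \<le> j" "has_period y s j"
  shows "y!j \<noteq> y!(j - s)"
proof
  assume eq: "y!j = y!(j - s)"
  have sl: "lyn_start y j + lyn y j = Suc j" using lyn_start_add_lyn[OF assms(2)] .
  have "\<forall>t<Suc j - s. y!(s+t) = y!t"
  proof (intro allI impI)
    fix t assume t: "t < Suc j - s"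
    show "y!(s+t) = y!t"
    proof (cases "s + t < j")
      case True thus ?thesis using assms(5) unfolding has_period_def by blast
    next
      case False
      hence "t = j - s" using t assms(4) by simp
      thus ?thesis using eq assms(4) by simp
    qed
  qed
  hence "factor y s (Suc j - s) = take (Suc j - s) y" using assms by (simp add: factor_eq_take_iff)
  moreover have "lyn_start y j + (s - lyn_start y j) = s" "lyn y j - (s - lyn_start y j) = Suc j - s"
    using sl assms by arith+
  moreover have "0 < s - lyn_start y j" "s - lyn_start y j < lyn y j" using sl assms by arith+
  ultimately show False
    using lyndon_factor_suffix_neq_take[OF assms(1) lyndon_lyn_factor[OF assms(2)], of "s - lyn_start y j"]
      sl assms by simp
qed

lemma period_break_self:
  fixes y :: "'a::linorder list"
  assumes "lyndon y" "j < length y" "lyn_start y j < j"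
  shows "period_break y j j"
  using lyn_start_less_period_break[OF assms] unfolding period_break_def has_period_def
  by simp

text \<open>If the period \<open>b\<close> of \<open>y[0..j)\<close> starts with a copy \<open>y[s..b)\<close> of the prefix of length
  \<open>L = b - s\<close>, then \<open>s\<close> is a period too: otherwise the first mismatch between \<open>y\<close> and its
  suffix at \<open>L\<close> would show up, shifted, as a mismatch against the suffix at \<open>s\<close> going the wrong
  way.\<close>

lemma has_period_shift:
  fixes y :: "'a::linorder list"
  assumes "lyndon y" "j < length y" "0 < s" "s + L = b" "0 < L" "b \<le> j" "has_period y b j"
    "\<forall>t<L. y!(s+t) = y!t"
  shows "has_period y s j"
proof -
  have shb: "y!(b+t) = y!t" if "b + t < j" for t using assms(7) that unfolding has_period_def by blast
  have L_period: "y!(L + t) = y!t" if "t < j - b" for t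
  proof (rule ccontr)
    assume "y!(L + t) \<noteq> y!t"
    have "L < length y" using assms by linarith
    then obtain i0 where i0: "L + i0 < length y" "\<forall>t<i0. y!t = y!(L+t)" "y!i0 < y!(L+i0)"
      using lyndon_first_mismatch[OF assms(1,5)] by blast
    have i0b: "i0 < j - b"
    proof (rule ccontr)
      assume "\<not> i0 < j - b"
      hence "y!t = y!(L+t)" using i0(2) that by simp
      thus False using \<open>y!(L + t) \<noteq> y!t\<close> by simp
    qed
    have agree: "y!t = y!(s+t)" if t: "t < L + i0" for t
    proof (cases "t < L")
      case True thus ?thesis using assms(8) by simp
    next
      case False
      hence "s + t = b + (t - L)" "b + (t - L) < j" using assms(4) t i0b by linarith+
      hence "y!(s+t) = y!(t - L)" using shb by simp
      also have "\<dots> = y!(L + (t - L))" using i0(2) t False by simp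
      finally show ?thesis using False by simp
    qed
    have e: "s + (L + i0) = b + i0" using assms(4) by simp
    have "b + i0 < j" using i0b by linarith
    hence at_i0: "y!(s + (L + i0)) = y!i0" unfolding e by (rule shb)
    have "s + (L + i0) < length y" using i0b assms(2,4) by linarith
    moreover have "\<forall>t<L + i0. y!t = y!(s+t)" using agree by blast
    moreover have "y!(L + i0) \<noteq> y!(s + (L + i0))" using at_i0 i0(3) by simp
    ultimately have "y!(L+i0) < y!(s + (L + i0))" by (rule lyndon_mismatch_less[OF assms(1,3)])
    thus False using at_i0 i0(3) by simp
  qed
  show ?thesis unfolding has_period_def
  proof (intro allI impI)
    fix t assume t: "s + t < j"
    show "y!(s+t) = y!t"
    proof (cases "t < L")
      case True thus ?thesis using assms(8) by simp
    next
      case False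
      hence "s + t = b + (t - L)" "b + (t - L) < j" "t - L < j - b" using t assms(4) by linarith+
      hence "y!(s+t) = y!(L + (t - L))" using shb L_period by simp
      thus ?thesis using False by simp
    qed
  qed
qed

lemma period_break_shift:
  fixes y :: "'a::linorder list"
  assumes "lyndon y" "j < length y" "lyn_start y j < s" "s + L = b" "0 < L" "b \<le> j"
    "period_break y b j" "factor y s L = take L y"
  shows "period_break y s j"
proof -
  have "\<forall>t<L. y!(s+t) = y!t" using assms(8) assms(2,4,6) by (simp add: factor_eq_take_iff)
  hence "has_period y s j"
    using has_period_shift[OF assms(1,2) _ assms(4,5,6)] assms(3,7) unfolding period_break_def by simp
  moreover have "y!j \<noteq> y!(j - s)"
    using lyn_start_less_period_break[OF assms(1-3) _ calculation] assms(4,6) by linarith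
  ultimately show ?thesis unfolding period_break_def by simp
qed

lemma period_break_periodic_upto:
  assumes "0 < b" "b \<le> j" "period_break y b j"
  shows "periodic_upto y b j" "y!j \<noteq> y!(j mod b)"
proof -
  show p: "periodic_upto y b j"
    using assms has_period_imp_periodic_upto unfolding period_break_def by blast
  show "y!j \<noteq> y!(j mod b)" using assms periodic_upto_nth_minus[OF p assms(1,2)]
    unfolding period_break_def by simp
qed

text \<open>A border of length \<open>Suc j - s\<close> would give \<open>y[0..j]\<close> the
  period \<open>s\<close>, impossible for \<open>s < q\<close> (Lyndon words are unbordered), for
  \<open>s = q\<close> (the period breaks at \<open>j\<close>) and for \<open>s > q\<close> (the two infinite powers would compare
  both ways).\<close>

lemma lyndon_take_Suc_break:
  fixes y :: "'a::linorder list"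
  assumes "lyndon y" "0 < q" "q \<le> j" "j < length y" "periodic_upto y q j" "y!j \<noteq> y!(j mod q)"
    "lyndon (take q y)"
  shows "lyndon (take (Suc j) y)"
  unfolding lyndon_def lexless_iff_lexordp
proof (intro conjI allI impI)
  show "take (Suc j) y \<noteq> []" using assms(4) by (cases y) auto
  fix s assume "0 < s \<and> s < length (take (Suc j) y)"
  hence s: "0 < s" "s \<le> j" using assms by auto
  have dr: "drop s (take (Suc j) y) = factor y s (Suc j - s)" unfolding factor_def
    by (simp add: drop_take)
  show "ord_class.lexordp (take (Suc j) y) (drop s (take (Suc j) y))"
  proof (cases "factor y s (Suc j - s) = take (Suc j - s) y")
    case False
    have tk: "take (Suc j) y = take (Suc j - s) y @ factor y (Suc j - s) s"
      using factor_append[of y 0 "Suc j - s" s] s by (simp add: factor_0)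
    have "ord_class.lexordp_eq (take (Suc j - s) y) (factor y s (Suc j - s))"
      using assms s by (intro lexordp_eq_take_factor) auto
    hence "ord_class.lexordp (take (Suc j - s) y) (factor y s (Suc j - s))"
      using False by (simp add: lexordp_eq_conv_lexord)
    hence "ord_class.lexordp (take (Suc j - s) y @ factor y (Suc j - s) s) (factor y s (Suc j - s) @ [])"
      using assms s by (intro lexordp_append_mismatch) (auto simp: length_factor)
    thus ?thesis using tk dr by simp
  next
    case True
    hence shift: "\<forall>t<Suc j - s. y!(s+t) = y!t" using assms s by (simp add: factor_eq_take_iff)
    hence period: "has_period y s (Suc j)" unfolding has_period_def by auto
    consider "s < q" | "s = q" | "q < s" by linarith
    hence False
    proof cases
      case 1
      have "drop s (take q y) = take (length (take q y) - s) (take q y)"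
        using shift 1 assms by (intro nth_equalityI) auto
      thus False using lyndon_drop_neq_take[OF assms(7), of s] 1 s assms by simp
    next
      case 2
      have "y!j = y!(j - q)" using shift 2 s by (metis Suc_diff_le le_add_diff_inverse lessI)
      thus False using periodic_upto_nth_minus[OF assms(5,2,3)] assms(6) by simp
    next
      case 3
      have "inf_prec (take s y) (take q y)"
        using inf_prec_take_periodic[OF assms(1,2) 3 s(2)] assms by simp
      moreover have "periodic_upto y s (Suc j)" using period has_period_imp_periodic_upto s by blast
      hence "inf_prec (take q y) (take s y)"
        using inf_lexless_pow_inf_take_break[OF assms(1,2) s(1)] assms s unfolding inf_prec_def by simp
      ultimately show False using inf_prec_asym by blast
    qed
    thus ?thesis ..
  qed
qed

text \<open>The maximal Lyndon factor ending at \<open>j\<close> is the copy of the one ending at \<open>j mod q\<close>: any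
  longer Lyndon factor would have a proper suffix equal to a prefix of \<open>y\<close>.\<close>

lemma lyn_periodic:
  fixes y :: "'a::linorder list"
  assumes "lyndon y" "0 < q" "q \<le> j" "j < length y" "periodic_upto y q (Suc j)"
  shows "lyn y j = lyn y (j mod q)" "lyn_factor y j = lyn_factor y (j mod q)"
proof -
  define r where "r = j mod q"
  define base where "base = j - r"
  have rj: "r \<le> j" unfolding r_def by simp
  have bdvd: "base mod q = 0" unfolding base_def r_def by (simp add: minus_mod_eq_mult_div)
  have rn: "r < length y" using rj assms by simp
  have bs: "base + Suc r = Suc j" using rj unfolding base_def by simp
  have copy: "y!(base + t) = y!t" if t: "t \<le> r" for t
  proof (rule periodic_upto_nth_eq[OF assms(5)])
    show "base + t < Suc j" "t < Suc j" using t rj unfolding base_def by simp_all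
    show "(base + t) mod q = t mod q" using bdvd by (simp add: mod_add_left_eq[symmetric])
  qed
  have same: "factor y (Suc j - L) L = factor y (Suc r - L) L" if L: "L \<le> Suc r" for L
  proof -
    have "Suc j - L = base + (Suc r - L)" using L bs by simp
    moreover have "factor y (base + (Suc r - L)) L = factor y (Suc r - L) L"
    proof (rule factor_eqI)
      show "base + (Suc r - L) + L \<le> length y" "Suc r - L + L \<le> length y"
        using bs L rj assms by simp_all
      fix t assume "t < L"
      hence "Suc r - L + t \<le> r" using L by simp
      thus "y!(base + (Suc r - L) + t) = y!(Suc r - L + t)" using copy by (simp add: add.assoc)
    qed
    ultimately show ?thesis by simp
  qed
  have longer: "\<not> lyndon (factor y (Suc j - L) L)" if L: "Suc r < L" "L \<le> Suc j" for L
  proof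
    assume ly: "lyndon (factor y (Suc j - L) L)"
    have "factor y base (Suc r) = take (Suc r) y"
      using copy bs assms by (simp add: factor_eq_take_iff)
    moreover have "Suc j - L + (L - Suc r) = base" "L - (L - Suc r) = Suc r"
      using L bs by auto
    moreover have "Suc j - L + L \<le> length y" "0 < L - Suc r" "L - Suc r < L" using L assms by auto
    ultimately show False using lyndon_factor_suffix_neq_take[OF assms(1) ly] by metis
  qed
  have lr: "0 < lyn y r \<and> lyn y r \<le> Suc r \<and> lyndon (factor y (Suc r - lyn y r) (lyn y r))"
    using lyn_props[OF rn] .
  have "lyn y j = lyn y r"
  proof (rule lyn_eqI)
    show "0 < lyn y r" "lyn y r \<le> Suc j" using lr rj by simp_all
    show "lyndon (factor y (Suc j - lyn y r) (lyn y r))" using lr same by simp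
    fix L' assume L': "lyn y r < L'" "L' \<le> Suc j"
    show "\<not> lyndon (factor y (Suc j - L') L')"
      using same lyn_maximal[OF rn L'(1)] longer L' by (cases "L' \<le> Suc r") simp_all
  qed
  moreover have "lyn_factor y j = lyn_factor y r"
    using calculation same lr unfolding lyn_start_def by simp
  ultimately show "lyn y j = lyn y (j mod q)" "lyn_factor y j = lyn_factor y (j mod q)"
    unfolding r_def by simp_all
qed

section \<open>Left Lyndon trees\<close>

declare llt_at.simps [simp del]

lemma llp_eqI:
  assumes "0 < m" "m < length w" "lyndon (take m w)"
    "\<And>m'. m < m' \<Longrightarrow> m' < length w \<Longrightarrow> \<not> lyndon (take m' w)"
  shows "llp w = m"
  unfolding llp_def
proof (rule Greatest_equality)
  show "0 < m \<and> m < length w \<and> lyndon (take m w)" using assms by simp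
  fix m' assume "0 < m' \<and> m' < length w \<and> lyndon (take m' w)"
  thus "m' \<le> m" using assms(4) by (metis not_le)
qed

lemma llp_bounds:
  assumes "2 \<le> length w"
  shows "0 < llp w \<and> llp w < length w"
proof -
  have "take 1 w = [w!0]" using assms by (cases w) auto
  hence "0 < (1::nat) \<and> 1 < length w \<and> lyndon (take 1 w)" using assms by (simp add: lyndon_singleton)
  hence "0 < llp w \<and> llp w < length w \<and> lyndon (take (llp w) w)"
    unfolding llp_def by (rule GreatestI_nat[where b = "length w"]) auto
  thus ?thesis by simp
qed

lemma llt_at_Node:
  assumes "0 < llp w" "llp w < length w"
  shows "llt_at w s = Node (llt_at (take (llp w) w) s) (llt_at (drop (llp w) w) (s + llp w))"
  using assms by (subst llt_at.simps) (simp add: Let_def)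

lemma llt_at_singleton: "llt_at [a] s = Leaf s"
  by (subst llt_at.simps) simp

lemma rightmost_leaf_llt_at: "w \<noteq> [] \<Longrightarrow> rightmost_leaf (llt_at w s) = s + length w - 1"
proof (induction w s rule: llt_at.induct)
  case (1 w s)
  show ?case
  proof (cases "length w \<le> 1")
    case True thus ?thesis using 1 by (subst llt_at.simps) (cases w, auto)
  next
    case False
    hence "2 \<le> length w" by simp
    hence r: "0 < llp w \<and> llp w < length w" by (rule llp_bounds)
    have "rightmost_leaf (llt_at (drop (llp w) w) (s + llp w)) = s + llp w + length (drop (llp w) w) - 1"
      using 1(2)[OF False refl] r by auto
    thus ?thesis using r llt_at_Node[of w s] by simp
  qed
qed

text \<open>One round of the inner loop: the Lyndon word \<open>y[b..j]\<close> is absorbed by the maximal Lyndon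
  factor ending at \<open>b - 1\<close>.\<close>

context
  fixes y :: "'a::linorder list" and j b :: nat
  assumes j_less: "j < length y" and start_less: "lyn_start y j < b" and b_le: "b \<le> j"
    and lyndon_v: "lyndon (factor y b (Suc j - b))"
    and inner_starts: "\<forall>p. b \<le> p \<longrightarrow> p < j \<longrightarrow> b \<le> lyn_start y p"
begin

lemma lyn_start_merge_bounds:
  "lyn_start y j \<le> lyn_start y (b - 1)" "lyn_start y (b - 1) < b"
proof -
  have "b - 1 < j" "b - 1 < length y" using start_less b_le j_less by auto
  thus "lyn_start y j \<le> lyn_start y (b - 1)"
    using lyn_start_mono[OF \<open>b - 1 < j\<close> j_less] start_less by simp
  show "lyn_start y (b - 1) < b"
    using lyn_start_add_lyn[of "b - 1" y] lyn_pos[of "b - 1" y] \<open>b - 1 < length y\<close> start_less by simp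
qed

lemma lyndon_merge: "lyndon (factor y (lyn_start y (b - 1)) (Suc j - lyn_start y (b - 1)))"
proof -
  have kn: "b - 1 < length y" using b_le j_less by simp
  have "lyn_factor y (b - 1) @ factor y b (Suc j - b) = factor y (lyn_start y (b - 1)) (Suc j - lyn_start y (b - 1))"
  proof -
    have "lyn_start y (b - 1) + lyn y (b - 1) = b" "lyn y (b - 1) + (Suc j - b) = Suc j - lyn_start y (b - 1)"
      using lyn_start_add_lyn[OF kn] start_less b_le by simp_all
    thus ?thesis using factor_append[of y "lyn_start y (b - 1)" "lyn y (b - 1)" "Suc j - b"] by simp
  qed
  thus ?thesis
    using lyndon_append[OF lyndon_lyn_factor[OF kn] lyndon_v lexordp_lyn_factor_factor[OF j_less start_less b_le]]
    by simp
qed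

lemma llt_at_merge:
  "llt_at (factor y (lyn_start y (b - 1)) (Suc j - lyn_start y (b - 1))) (lyn_start y (b - 1)) =
     Node (llt_at (lyn_factor y (b - 1)) (lyn_start y (b - 1))) (llt_at (factor y b (Suc j - b)) b)"
proof -
  define k where "k = b - 1"
  have kn: "k < length y" "b = Suc k" using start_less b_le j_less unfolding k_def by auto
  have sk: "lyn_start y k + lyn y k = b" using lyn_start_add_lyn[OF kn(1)] kn by simp
  define w where "w = factor y (lyn_start y k) (Suc j - lyn_start y k)"
  have lw: "length w = Suc j - lyn_start y k" unfolding w_def using sk b_le j_less by (simp add: length_factor)
  have "llp w = lyn y k"
  proof (rule llp_eqI)
    show "0 < lyn y k" by (rule lyn_pos[OF kn(1)])
    show "lyn y k < length w" using lw sk b_le by simp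
    show "lyndon (take (lyn y k) w)" unfolding w_def using lyndon_lyn_factor[OF kn(1)] sk b_le
      by (simp add: take_factor)
    fix m' assume m': "lyn y k < m'" "m' < length w"
    show "\<not> lyndon (take m' w)"
    proof
      assume "lyndon (take m' w)"
      hence ly: "lyndon (factor y (lyn_start y k) m')" unfolding w_def using m' lw by (simp add: take_factor)
      define p where "p = lyn_start y k + m' - 1"
      have p: "b \<le> p" "p < j" "Suc p - m' = lyn_start y k" "m' \<le> Suc p"
        using m' sk lw unfolding p_def by auto
      have "m' \<le> lyn y p"
      proof (rule ccontr)
        assume "\<not> m' \<le> lyn y p"
        thus False using lyn_maximal[of p y m'] ly p j_less by simp
      qed
      hence "lyn_start y p \<le> lyn_start y k" using p(3) unfolding lyn_start_def by simp
      moreover have "b \<le> lyn_start y p" using inner_starts p(1,2) by blast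
      moreover have "lyn_start y k < b" using sk lyn_pos[OF kn(1)] by simp
      ultimately show False by simp
    qed
  qed
  moreover have "take (lyn y k) w = lyn_factor y k" "drop (lyn y k) w = factor y b (Suc j - b)"
    unfolding w_def using sk b_le by (simp_all add: take_factor drop_factor)
  moreover have "0 < lyn y k" "lyn y k < length w" using lyn_pos[OF kn(1)] lw sk b_le by auto
  ultimately show ?thesis using llt_at_Node[of w "lyn_start y k"] sk unfolding w_def k_def by simp
qed

lemma lyn_start_merge_inner:
  "\<forall>p. lyn_start y (b - 1) \<le> p \<longrightarrow> p < j \<longrightarrow> lyn_start y (b - 1) \<le> lyn_start y p"
proof (intro allI impI)
  fix p assume p: "lyn_start y (b - 1) \<le> p" "p < j"
  consider "b \<le> p" | "p = b - 1" | "p < b - 1" by linarith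
  thus "lyn_start y (b - 1) \<le> lyn_start y p"
  proof cases
    case 1
    hence "b \<le> lyn_start y p" using inner_starts p(2) by blast
    thus ?thesis using lyn_start_merge_bounds(2) by simp
  next
    case 3 thus ?thesis using lyn_start_mono[OF 3, of y] p b_le j_less by simp
  qed simp
qed

end

text \<open>\<open>lyn_stack y b\<close> holds the last positions of the factors of the Lyndon factorization of
  \<open>y[0..b)\<close>, computed right to left by repeatedly splitting off the longest Lyndon suffix; these
  are the positions whose subtrees form the forest the algorithm keeps for that prefix.\<close>

function lyn_stack :: "'a::linorder list \<Rightarrow> nat \<Rightarrow> nat set" where
  "lyn_stack y b =
     (if 0 < b \<and> b \<le> length y then insert (b - 1) (lyn_stack y (lyn_start y (b - 1))) else {})"
  by pat_completeness auto
termination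
proof (relation "measure (\<lambda>(y, b). b)")
  fix y :: "'a::linorder list" and b :: nat
  assume "0 < b \<and> b \<le> length y"
  moreover from this have "lyn_start y (b - 1) \<le> b - 1" by (intro lyn_start_le) linarith
  ultimately have "lyn_start y (b - 1) < b" by linarith
  thus "((y, lyn_start y (b - 1)), y, b) \<in> measure (\<lambda>(y, b). b)" by simp
qed simp

declare lyn_stack.simps [simp del]

lemma lyn_stack_0 [simp]: "lyn_stack y 0 = {}"
  by (simp add: lyn_stack.simps)

lemma lyn_stack_Suc: "p < length y \<Longrightarrow> lyn_stack y (Suc p) = insert p (lyn_stack y (lyn_start y p))"
  by (simp add: lyn_stack.simps)

lemma lyn_stack_less: "p \<in> lyn_stack y b \<Longrightarrow> p < b"
proof (induction y b rule: lyn_stack.induct)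
  case (1 y b)
  show ?case
  proof (cases "0 < b \<and> b \<le> length y")
    case True
    hence "lyn_start y (b - 1) \<le> b - 1" by (intro lyn_start_le) linarith
    thus ?thesis using 1 True by (auto simp: lyn_stack.simps[of y b])
  next
    case False thus ?thesis using 1(2) by (subst (asm) lyn_stack.simps) (simp split: if_splits)
  qed
qed

lemma lyn_stack_merge:
  assumes "0 < b" "b \<le> length y"
  shows "lyn_stack y b = insert (b - 1) (lyn_stack y (lyn_start y (b - 1)))"
    "b - 1 \<notin> lyn_stack y (lyn_start y (b - 1))"
proof -
  have "b - 1 < length y" using assms by simp
  thus "lyn_stack y b = insert (b - 1) (lyn_stack y (lyn_start y (b - 1)))"
    using lyn_stack_Suc[of "b - 1" y] assms by simp
  show "b - 1 \<notin> lyn_stack y (lyn_start y (b - 1))"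
    using lyn_stack_less lyn_start_le[OF \<open>b - 1 < length y\<close>] by fastforce
qed

definition lyn_tree :: "'a::linorder list \<Rightarrow> nat \<Rightarrow> tree" where
  "lyn_tree y p = llt_at (lyn_factor y p) (lyn_start y p)"

lemma rightmost_leaf_lyn_tree: "p < length y \<Longrightarrow> rightmost_leaf (lyn_tree y p) = p"
proof -
  assume p: "p < length y"
  have sl: "lyn_start y p + lyn y p = Suc p" using lyn_start_add_lyn[OF p] .
  have "lyn_factor y p \<noteq> []" using sl p lyn_pos[OF p] by (simp add: factor_def)
  hence "rightmost_leaf (lyn_tree y p) = lyn_start y p + length (lyn_factor y p) - 1"
    unfolding lyn_tree_def by (rule rightmost_leaf_llt_at)
  thus ?thesis using sl p by (simp add: length_factor)
qed

section \<open>Pointer structures\<close>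

text \<open>The bound \<open>F\<close> on the internal nodes used keeps a representation valid when further
  nodes are linked in above it.\<close>

inductive represents_below :: "alg_state \<Rightarrow> nat \<Rightarrow> nat \<Rightarrow> nat \<Rightarrow> tree \<Rightarrow> bool" where
  leaf_below: "q < n \<Longrightarrow> represents_below s n F q (Leaf q)"
| node_below: "n \<le> q \<Longrightarrow> q < F \<Longrightarrow> represents_below s n F (lchild s q) t1 \<Longrightarrow> represents_below s n F (rchild s q) t2
    \<Longrightarrow> represents_below s n F q (Node t1 t2)"

lemma represents_below_represents: "represents_below s n F q t \<Longrightarrow> represents s n q t"
  by (induction rule: represents_below.induct) (auto intro: represents.intros)

lemma represents_below_cong:
  "represents_below s n F q t \<Longrightarrow> (\<forall>q'. n \<le> q' \<longrightarrow> q' < F \<longrightarrow> lchild s' q' = lchild s q' \<and> rchild s' q' = rchild s q')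
   \<Longrightarrow> represents_below s' n F q t"
  by (induction rule: represents_below.induct) (auto intro: represents_below.intros)

lemma represents_below_mono: "represents_below s n F q t \<Longrightarrow> F \<le> F' \<Longrightarrow> represents_below s n F' q t"
  by (induction rule: represents_below.induct) (auto intro: represents_below.intros)

fun tree_nodes :: "alg_state \<Rightarrow> nat \<Rightarrow> tree \<Rightarrow> nat set" where
  "tree_nodes s q (Leaf p) = {}"
| "tree_nodes s q (Node t1 t2) = insert q (tree_nodes s (lchild s q) t1 \<union> tree_nodes s (rchild s q) t2)"

lemma tree_nodes_cong:
  "represents_below s n F q t \<Longrightarrow> (\<forall>q'. n \<le> q' \<longrightarrow> q' < F \<longrightarrow> lchild s' q' = lchild s q' \<and> rchild s' q' = rchild s q')
   \<Longrightarrow> tree_nodes s' q t = tree_nodes s q t"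
  by (induction rule: represents_below.induct) auto

lemma represents_below_same_children:
  assumes "lchild s' = lchild s" "rchild s' = rchild s"
  shows "represents_below s' n F r t \<longleftrightarrow> represents_below s n F r t"
  using represents_below_cong[of s' n F r t s] represents_below_cong[of s n F r t s'] assms
  by auto

lemma tree_nodes_same_children:
  "lchild s' = lchild s \<Longrightarrow> rchild s' = rchild s \<Longrightarrow> tree_nodes s' r t = tree_nodes s r t"
  by (induction t arbitrary: r) auto

lemma represents_unique:
  "represents s n q t1 \<Longrightarrow> represents s n q t2 \<Longrightarrow> t1 = t2"
proof (induction arbitrary: t2 rule: represents.induct)
  case (leaf q n s)
  from leaf.prems show ?case by (cases rule: represents.cases) (use leaf.hyps in auto)
next
  case (node n q s t1 t2 t2')
  from node.prems show ?case
  proof (cases rule: represents.cases)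
    case leaf thus ?thesis using node.hyps(1) by simp
  next
    case (node u1 u2)
    have "t1 = u1" using node.IH(1) node(3) by blast
    moreover have "t2 = u2" using node.IH(2) node(4) by blast
    ultimately show ?thesis using node(1) by simp
  qed
qed

lemma reach_trans: "reach s n b c \<Longrightarrow> reach s n a b \<Longrightarrow> reach s n a c"
  by (induction rule: reach.induct) (auto intro: reach.intros)

lemma represents_childrenE:
  assumes "represents s n q t" "n \<le> q"
  obtains t1 t2 where "t = Node t1 t2" "represents s n (lchild s q) t1" "represents s n (rchild s q) t2"
  using assms by (cases rule: represents.cases) auto

lemma reach_represents_subtree:
  "reach s n r q \<Longrightarrow> represents s n r t \<Longrightarrow> \<exists>t'. represents s n q t' \<and> tree_nodes s q t' \<subseteq> tree_nodes s r t"
proof (induction rule: reach.induct)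
  case (left s n r q)
  then obtain t' where t': "represents s n q t'" "tree_nodes s q t' \<subseteq> tree_nodes s r t" by blast
  then obtain t1 t2 where "t' = Node t1 t2" "represents s n (lchild s q) t1"
    using left.hyps(2) by (auto elim: represents_childrenE)
  thus ?case using t'(2) by auto
next
  case (right s n r q)
  then obtain t' where t': "represents s n q t'" "tree_nodes s q t' \<subseteq> tree_nodes s r t" by blast
  then obtain t1 t2 where "t' = Node t1 t2" "represents s n (rchild s q) t2"
    using right.hyps(2) by (auto elim: represents_childrenE)
  thus ?case using t'(2) by auto
qed blast

lemma tree_nodes_reach:
  "represents s n q t \<Longrightarrow> q' \<in> tree_nodes s q t \<Longrightarrow> reach s n q q' \<and> n \<le> q'"
proof (induction rule: represents.induct)
  case (node n q s t1 t2)
  have l: "reach s n q (lchild s q)" "reach s n q (rchild s q)"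
    using node.hyps(1) by (auto intro: reach.intros)
  from node.prems consider "q' = q" | "q' \<in> tree_nodes s (lchild s q) t1"
    | "q' \<in> tree_nodes s (rchild s q) t2" by auto
  thus ?case
  proof cases
    case 1 thus ?thesis using node.hyps(1) by (auto intro: reach.intros)
  next
    case 2 thus ?thesis using node.IH(1) l reach_trans by blast
  next
    case 3 thus ?thesis using node.IH(2) l reach_trans by blast
  qed
qed simp

lemma reach_eq_tree_nodes:
  assumes "represents s n q t"
  shows "{q'. reach s n q q' \<and> n \<le> q'} = tree_nodes s q t"
proof
  show "{q'. reach s n q q' \<and> n \<le> q'} \<subseteq> tree_nodes s q t"
  proof
    fix q' assume "q' \<in> {q'. reach s n q q' \<and> n \<le> q'}"
    hence h: "reach s n q q'" "n \<le> q'" by auto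
    then obtain t' where "represents s n q' t'" "tree_nodes s q' t' \<subseteq> tree_nodes s q t"
      using reach_represents_subtree assms by blast
    moreover obtain t1 t2 where "t' = Node t1 t2"
      using calculation(1) h(2) by (rule represents_childrenE)
    ultimately show "q' \<in> tree_nodes s q t" by auto
  qed
  show "tree_nodes s q t \<subseteq> {q'. reach s n q q' \<and> n \<le> q'}"
    using tree_nodes_reach[OF assms] by blast
qed

section \<open>Invariants of the algorithm\<close>

text \<open>The order in which the algorithm creates nodes: node \<open>q\<close> is created in iteration \<open>i\<close>, where
  its prefix \<open>y[0..a)\<close> is a period of \<open>y[0..i)\<close> that breaks at \<open>i\<close>; within one iteration the
  prefixes shrink.\<close>

lemma inf_prec_take_of_period_breaks:
  fixes y :: "'a::linorder list"
  assumes "lyndon y" "0 < a" "a \<le> i" "i < length y" "periodic_upto y a i" "y!i \<noteq> y!(i mod a)"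
    and "0 < b" "b \<le> i'" "i' < length y" "periodic_upto y b i'"
    and "i < i' \<or> (i = i' \<and> b < a)"
  shows "inf_prec (take a y) (take b y)"
  using assms(11)
proof
  assume "i < i'"
  hence "periodic_upto y b (Suc i)" using periodic_upto_mono[OF assms(10)] by simp
  hence "inf_lexless (pow_inf (take a y)) (pow_inf (take b y))"
    using inf_lexless_pow_inf_take_break[OF assms(1,2,7) _ _ assms(4,5,6)] assms(3,4,8,9) \<open>i < i'\<close>
    by simp
  thus ?thesis unfolding inf_prec_def by simp
next
  assume "i = i' \<and> b < a"
  thus ?thesis using inf_prec_take_periodic[OF assms(1,7) _ assms(3)] assms(4,5,10) by simp
qed

definition link :: "alg_state \<Rightarrow> nat \<Rightarrow> nat \<Rightarrow> alg_state" where
  "link s k j = s\<lparr>lchild := (lchild s)(fresh s := root s k), rchild := (rchild s)(fresh s := root s j),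
      root := (root s)(j := fresh s), fresh := Suc (fresh s), created := created s @ [fresh s]\<rparr>"

lemma inner_step_link: "inner_step j (s, l, k) = (link s k j, l + lyns s k, k - lyns s k)"
  by (simp add: inner_step_def link_def Let_def)

lemma link_simps [simp]:
  "lyns (link s k j) = lyns s" "per (link s k j) = per s" "idx (link s k j) = idx s"
  "fresh (link s k j) = Suc (fresh s)" "created (link s k j) = created s @ [fresh s]"
  "root (link s k j) = (root s)(j := fresh s)"
  "lchild (link s k j) (fresh s) = root s k" "rchild (link s k j) (fresh s) = root s j"
  by (simp_all add: link_def)

lemma link_children_below:
  "q < fresh s \<Longrightarrow> lchild (link s k j) q = lchild s q \<and> rchild (link s k j) q = rchild s q"
  by (simp add: link_def)

lemma represents_below_link:
  "represents_below s n (fresh s) r t \<Longrightarrow> represents_below (link s k j) n (fresh (link s k j)) r t"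
  using represents_below_cong[of s n "fresh s" r t "link s k j"] link_children_below
  by (auto intro: represents_below_mono)

lemma tree_nodes_link:
  "represents_below s n (fresh s) r t \<Longrightarrow> tree_nodes (link s k j) r t = tree_nodes s r t"
  using tree_nodes_cong link_children_below by blast

lemma link_root:
  assumes "n \<le> fresh s" "represents_below s n (fresh s) (root s k) t1"
    "represents_below s n (fresh s) (root s j) t2"
  shows "represents_below (link s k j) n (fresh (link s k j)) (root (link s k j) j) (Node t1 t2)"
    "tree_nodes (link s k j) (root (link s k j) j) (Node t1 t2) =
       insert (fresh s) (tree_nodes s (root s k) t1 \<union> tree_nodes s (root s j) t2)"
  using assms represents_below_link[OF assms(2)] represents_below_link[OF assms(3)]
    tree_nodes_link[OF assms(2)] tree_nodes_link[OF assms(3)]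
  by (auto intro: node_below)

text \<open>Ghost information on the created nodes: node \<open>n + c\<close> was created in outer iteration
  \<open>iter c\<close>, and its associated prefix has length \<open>plen c\<close>.\<close>

definition creation_log :: "'a::linorder list \<Rightarrow> alg_state \<Rightarrow> (nat \<Rightarrow> nat) \<Rightarrow> (nat \<Rightarrow> nat) \<Rightarrow> bool" where
  "creation_log y s plen iter \<longleftrightarrow>
    (\<forall>c<length (created s). 0 < plen c \<and> plen c \<le> iter c \<and> iter c < length y \<and>
        periodic_upto y (plen c) (iter c) \<and> y!(iter c) \<noteq> y!(iter c mod plen c) \<and>
        (\<exists>t. represents_below s (length y) (fresh s) (lchild s (length y + c)) t \<and>
             rightmost_leaf t = plen c - 1)) \<and>
    (\<forall>c c'. c < c' \<longrightarrow> c' < length (created s) \<longrightarrow>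
        iter c < iter c' \<or> (iter c = iter c' \<and> plen c' < plen c))"

lemma creation_log_cong:
  assumes "lchild s' = lchild s" "rchild s' = rchild s" "fresh s' = fresh s" "created s' = created s"
  shows "creation_log y s' plen iter \<longleftrightarrow> creation_log y s plen iter"
  using assms represents_below_same_children[OF assms(1,2)] by (simp add: creation_log_def)

lemma creation_log_link:
  fixes y :: "'a::linorder list"
  assumes log: "creation_log y s plen iter" and ids: "created s = [length y..<fresh s]"
    "length y \<le> fresh s"
    and left: "represents_below s (length y) (fresh s) (root s k) t" "rightmost_leaf t = b - 1"
    and break: "0 < b" "b \<le> j" "j < length y" "periodic_upto y b j" "y!j \<noteq> y!(j mod b)"
    and later: "\<forall>c<length (created s). iter c \<le> j \<and> (iter c = j \<longrightarrow> b < plen c)"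
  defines "len \<equiv> length (created s)"
  shows "creation_log y (link s k j) (plen(len := b)) (iter(len := j))"
proof -
  have new: "length y + len = fresh s" unfolding len_def using ids by simp
  have old: "lchild (link s k j) (length y + c) = lchild s (length y + c)" if "c < len" for c
    using that new link_children_below[of "length y + c" s] by simp
  show ?thesis unfolding creation_log_def
  proof (rule conjI; intro allI impI)
    fix c assume "c < length (created (link s k j))"
    hence "c < len \<or> c = len" unfolding len_def by auto
    thus "0 < (plen(len := b)) c \<and> (plen(len := b)) c \<le> (iter(len := j)) c \<and>
        (iter(len := j)) c < length y \<and>
        periodic_upto y ((plen(len := b)) c) ((iter(len := j)) c) \<and>
        y!((iter(len := j)) c) \<noteq> y!((iter(len := j)) c mod (plen(len := b)) c) \<and>
        (\<exists>t. represents_below (link s k j) (length y) (fresh (link s k j))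
               (lchild (link s k j) (length y + c)) t \<and> rightmost_leaf t = (plen(len := b)) c - 1)"
    proof
      assume c: "c < len"
      have h: "0 < plen c" "plen c \<le> iter c" "iter c < length y" "periodic_upto y (plen c) (iter c)"
        "y!(iter c) \<noteq> y!(iter c mod plen c)"
        "\<exists>t. represents_below s (length y) (fresh s) (lchild s (length y + c)) t \<and>
           rightmost_leaf t = plen c - 1"
        using log c unfolding creation_log_def len_def by blast+
      then obtain t where "represents_below s (length y) (fresh s) (lchild s (length y + c)) t"
        "rightmost_leaf t = plen c - 1" by blast
      thus ?thesis using h c old[OF c] represents_below_link[of s _ _ t k j] by auto
    next
      assume "c = len"
      thus ?thesis using break left new represents_below_link[OF left(1), of k j] by auto
    qed
  next
    fix c c' assume cc: "c < c'" "c' < length (created (link s k j))"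
    show "(iter(len := j)) c < (iter(len := j)) c' \<or>
        ((iter(len := j)) c = (iter(len := j)) c' \<and> (plen(len := b)) c' < (plen(len := b)) c)"
    proof (cases "c' = len")
      case True thus ?thesis using cc later unfolding len_def by force
    next
      case False
      hence "c' < len" using cc unfolding len_def by simp
      thus ?thesis using log cc unfolding creation_log_def len_def by auto
    qed
  qed
qed

definition scan_inv :: "'a::linorder list \<Rightarrow> nat \<Rightarrow> alg_state \<Rightarrow> bool" where
  "scan_inv y j s \<longleftrightarrow>
    0 < per s \<and> per s \<le> Suc j \<and> idx s = Suc j mod per s \<and>
    periodic_upto y (per s) (Suc j) \<and> lyndon (take (per s) y) \<and>
    (\<forall>p\<le>j. lyns s p = lyn y p) \<and> (\<forall>p\<le>j. lyn_factor y p = take (lyn y p) y)"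

lemma scan_inv_link [simp]: "scan_inv y j (link s k j') \<longleftrightarrow> scan_inv y j s"
  by (simp add: scan_inv_def)

text \<open>During iteration \<open>j\<close>, while the current tree spans \<open>y[b..j]\<close>: the prefix lengths used
  so far are the \<open>m + 1\<close> with \<open>m < j\<close> not ending a factor of the stack, and the nodes created
  in iteration \<open>j\<close> have prefixes longer than \<open>b\<close>.\<close>

definition inner_log :: "'a::linorder list \<Rightarrow> nat \<Rightarrow> alg_state \<Rightarrow> nat \<Rightarrow> bool" where
  "inner_log y j s b \<longleftrightarrow>
    (\<exists>plen iter. creation_log y s plen iter \<and>
       (\<forall>c<length (created s). iter c \<le> j \<and> (iter c = j \<longrightarrow> b < plen c)) \<and>
       plen ` {..<length (created s)} = Suc ` ({0..j} - insert j (lyn_stack y b)))"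

lemma inner_log_link:
  fixes y :: "'a::linorder list"
  assumes log: "inner_log y j s b" and ids: "created s = [length y..<fresh s]" "length y \<le> fresh s"
    and b: "0 < b" "b \<le> j" "j < length y" "period_break y b j"
    and left: "represents_below s (length y) (fresh s) (root s (b - 1)) (lyn_tree y (b - 1))"
  shows "inner_log y j (link s (b - 1) j) (lyn_start y (b - 1))"
proof -
  define k where "k = b - 1"
  define b' where "b' = lyn_start y k"
  define len where "len = length (created s)"
  have kn: "k < length y" "b = Suc k" "k < j" using b unfolding k_def by auto
  have b'k: "b' \<le> k" unfolding b'_def by (rule lyn_start_le[OF kn(1)])
  have stack: "lyn_stack y b = insert k (lyn_stack y b')" "k \<notin> lyn_stack y b'"
    using lyn_stack_merge[of b y] b unfolding k_def b'_def by simp_all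
  obtain plen iter where G: "creation_log y s plen iter"
      "\<forall>c<len. iter c \<le> j \<and> (iter c = j \<longrightarrow> b < plen c)"
      "plen ` {..<len} = Suc ` ({0..j} - insert j (lyn_stack y b))"
    using log unfolding inner_log_def len_def by blast
  have rm: "rightmost_leaf (lyn_tree y k) = b - 1"
    using rightmost_leaf_lyn_tree[OF kn(1)] unfolding k_def by simp
  have "creation_log y (link s k j) (plen(len := b)) (iter(len := j))"
    using creation_log_link[OF G(1) ids left[folded k_def] rm b(1,2,3)
        period_break_periodic_upto[OF b(1,2,4)] G(2)[unfolded len_def]]
    unfolding len_def .
  moreover have "\<forall>c<length (created (link s k j)). (iter(len := j)) c \<le> j \<and>
      ((iter(len := j)) c = j \<longrightarrow> b' < (plen(len := b)) c)"
  proof (intro allI impI)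
    fix c assume "c < length (created (link s k j))"
    hence "c < len \<or> c = len" unfolding len_def by auto
    thus "(iter(len := j)) c \<le> j \<and> ((iter(len := j)) c = j \<longrightarrow> b' < (plen(len := b)) c)"
      using G(2) b'k kn b by auto
  qed
  moreover have "(plen(len := b)) ` {..<length (created (link s k j))} =
      Suc ` ({0..j} - insert j (lyn_stack y b'))"
  proof -
    have "{..<length (created (link s k j))} = insert len {..<len}" unfolding len_def by auto
    hence "(plen(len := b)) ` {..<length (created (link s k j))} = insert (Suc k) (plen ` {..<len})"
      using kn by auto
    also have "\<dots> = Suc ` insert k ({0..j} - insert j (lyn_stack y b))" using G(3) by simp
    also have "insert k ({0..j} - insert j (lyn_stack y b)) = {0..j} - insert j (lyn_stack y b')"
      using stack kn by auto
    finally show ?thesis .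
  qed
  ultimately show ?thesis unfolding inner_log_def k_def[symmetric] b'_def[symmetric] by blast
qed

definition inner_inv :: "'a::linorder list \<Rightarrow> nat \<Rightarrow> alg_state \<Rightarrow> nat \<Rightarrow> bool" where
  "inner_inv y j s b \<longleftrightarrow>
    lyn_start y j \<le> b \<and> b \<le> j \<and> scan_inv y j s \<and>
    length y \<le> fresh s \<and> created s = [length y..<fresh s] \<and>
    (\<forall>p<j. represents_below s (length y) (fresh s) (root s p) (lyn_tree y p)) \<and>
    lyndon (factor y b (Suc j - b)) \<and>
    represents_below s (length y) (fresh s) (root s j) (llt_at (factor y b (Suc j - b)) b) \<and>
    (\<forall>p. b \<le> p \<longrightarrow> p < j \<longrightarrow> b \<le> lyn_start y p) \<and>
    (lyn_start y j < b \<longrightarrow> period_break y b j) \<and>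
    set (created s) = tree_nodes s (root s j) (llt_at (factor y b (Suc j - b)) b) \<union>
                      (\<Union>p\<in>lyn_stack y b. tree_nodes s (root s p) (lyn_tree y p)) \<and>
    inner_log y j s b"

lemma inner_inv_step:
  fixes y :: "'a::linorder list"
  assumes y: "lyndon y" and jn: "j < length y" and inv: "inner_inv y j s b"
    and cond: "lyn_start y j < b"
  defines "k \<equiv> b - 1"
  shows "inner_inv y j (link s k j) (lyn_start y k)"
proof -
  define n where "n = length y"
  define b' where "b' = lyn_start y k"
  define s' where "s' = link s k j"
  have I: "b \<le> j" "scan_inv y j s" "n \<le> fresh s" "created s = [n..<fresh s]"
    "\<forall>p<j. represents_below s n (fresh s) (root s p) (lyn_tree y p)"
    "lyndon (factor y b (Suc j - b))"
    "represents_below s n (fresh s) (root s j) (llt_at (factor y b (Suc j - b)) b)"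
    "\<forall>p. b \<le> p \<longrightarrow> p < j \<longrightarrow> b \<le> lyn_start y p" "period_break y b j"
    "set (created s) = tree_nodes s (root s j) (llt_at (factor y b (Suc j - b)) b) \<union>
        (\<Union>p\<in>lyn_stack y b. tree_nodes s (root s p) (lyn_tree y p))"
    "inner_log y j s b"
    using inv cond unfolding inner_inv_def n_def by blast+
  have kj: "k < j" "b = Suc k" using cond I(1) unfolding k_def by auto
  have kn: "k < length y" using kj jn by simp
  note merge = lyn_start_merge_bounds[OF jn cond I(1,6,8), folded k_def b'_def]
    lyndon_merge[OF jn cond I(1,6,8), folded k_def b'_def]
    llt_at_merge[OF jn cond I(1,6,8), folded k_def b'_def lyn_tree_def]
    lyn_start_merge_inner[OF jn cond I(1,6,8), folded k_def b'_def]
  have stack: "lyn_stack y b = insert k (lyn_stack y b')"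
    using lyn_stack_merge[of b y] kj jn unfolding k_def b'_def by simp
  have rep_k: "represents_below s n (fresh s) (root s k) (lyn_tree y k)" using I(5) kj by simp
  have rep_new: "represents_below s' n (fresh s') (root s' j) (llt_at (factor y b' (Suc j - b')) b')"
    using link_root(1)[OF I(3) rep_k I(7)] merge(4) unfolding s'_def by simp
  have nodes_stack: "(\<Union>p\<in>lyn_stack y b'. tree_nodes s' (root s' p) (lyn_tree y p)) =
      (\<Union>p\<in>lyn_stack y b'. tree_nodes s (root s p) (lyn_tree y p))"
  proof (rule SUP_cong[OF refl])
    fix p assume "p \<in> lyn_stack y b'"
    hence "p < j" using lyn_stack_less merge(2) kj by fastforce
    hence rep: "represents_below s n (fresh s) (root s p) (lyn_tree y p)" using I(5) by simp
    show "tree_nodes s' (root s' p) (lyn_tree y p) = tree_nodes s (root s p) (lyn_tree y p)"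
      using tree_nodes_link[OF rep, of k j] \<open>p < j\<close> unfolding s'_def by simp
  qed
  have nodes: "set (created s') = tree_nodes s' (root s' j) (llt_at (factor y b' (Suc j - b')) b') \<union>
      (\<Union>p\<in>lyn_stack y b'. tree_nodes s' (root s' p) (lyn_tree y p))"
    using link_root(2)[OF I(3) rep_k I(7)] merge(4) I(10) stack nodes_stack
    unfolding s'_def by auto
  have break: "lyn_start y j < b' \<longrightarrow> period_break y b' j"
    using period_break_shift[OF y jn _ _ lyn_pos[OF kn] I(1) I(9)] lyn_start_add_lyn[OF kn] I(2) kj
    unfolding scan_inv_def b'_def by auto
  have log: "inner_log y j s' b'"
    using inner_log_link[OF I(11) I(4,3)[unfolded n_def] _ I(1) jn I(9)] rep_k kj
    unfolding s'_def b'_def k_def n_def by simp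
  show ?thesis
    unfolding inner_inv_def s'_def[symmetric] b'_def[symmetric]
    using merge(1,2,3,5) I(1-5) rep_new nodes break log represents_below_link
    unfolding s'_def n_def by simp
qed

definition outer_inv :: "'a::linorder list \<Rightarrow> nat \<Rightarrow> alg_state \<Rightarrow> bool" where
  "outer_inv y j s \<longleftrightarrow>
    scan_inv y j s \<and> length y \<le> fresh s \<and> created s = [length y..<fresh s] \<and>
    (\<forall>p\<le>j. represents_below s (length y) (fresh s) (root s p) (lyn_tree y p)) \<and>
    set (created s) = (\<Union>p\<in>lyn_stack y (Suc j). tree_nodes s (root s p) (lyn_tree y p)) \<and>
    (\<exists>plen iter. creation_log y s plen iter \<and> (\<forall>c<length (created s). iter c \<le> j) \<and>
       plen ` {..<length (created s)} = Suc ` ({0..j} - lyn_stack y (Suc j)))"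

definition outer_prepare :: "'a list \<Rightarrow> nat \<Rightarrow> alg_state \<Rightarrow> alg_state" where
  "outer_prepare y j s =
     (if y ! j \<noteq> y ! idx s
      then s\<lparr>root := (root s)(j := j), lyns := (lyns s)(j := Suc j), per := Suc j, idx := 0\<rparr>
      else s\<lparr>root := (root s)(j := j), lyns := (lyns s)(j := lyns s (idx s)),
              idx := Suc (idx s) mod per s\<rparr>)"

lemma outer_step_eq: "outer_step y j s = inner_loop j (outer_prepare y j s)"
  by (simp add: outer_step_def outer_prepare_def Let_def)

lemma outer_prepare_simps [simp]:
  "lchild (outer_prepare y j s) = lchild s" "rchild (outer_prepare y j s) = rchild s"
  "fresh (outer_prepare y j s) = fresh s" "created (outer_prepare y j s) = created s"
  "root (outer_prepare y j s) = (root s)(j := j)"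
  by (simp_all add: outer_prepare_def)

text \<open>The scan of \<open>lyns\<close>, \<open>per\<close> and \<open>idx\<close> is Duval's algorithm: \<open>per\<close> is the length of the
  longest Lyndon prefix read so far, and \<open>y[0..j]\<close> is a prefix of its infinite power.\<close>

lemma scan_inv_prepare:
  fixes y :: "'a::linorder list"
  assumes y: "lyndon y" and j: "0 < j" "j < length y" and S: "scan_inv y (j - 1) s"
  shows "scan_inv y j (outer_prepare y j s)"
proof -
  define q where "q = per s"
  have Sj: "Suc (j - 1) = j" using j by simp
  have S': "0 < q" "q \<le> j" "idx s = j mod q" "periodic_upto y q j" "lyndon (take q y)"
    "\<forall>p<j. lyns s p = lyn y p" "\<forall>p<j. lyn_factor y p = take (lyn y p) y"
    using S j unfolding scan_inv_def Sj q_def by (auto simp: less_Suc_eq_le)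
  show ?thesis
  proof (cases "y ! j \<noteq> y ! (j mod q)")
    case True
    have "lyndon (take (Suc j) y)" using lyndon_take_Suc_break[OF y S'(1,2) j(2) S'(4) True S'(5)] .
    hence lj: "lyn y j = Suc j" by (intro lyn_eqI) (auto simp: factor_0)
    hence "lyn_start y j = 0" unfolding lyn_start_def by simp
    thus ?thesis using S' True lj \<open>lyndon (take (Suc j) y)\<close>
      unfolding scan_inv_def outer_prepare_def periodic_upto_def
      by (auto simp: factor_0 le_less)
  next
    case False
    have per: "periodic_upto y q (Suc j)"
      using S'(4) False unfolding periodic_upto_def by (auto simp: less_Suc_eq)
    have r: "j mod q < j" using S'(1,2) by (meson less_le_trans mod_less_divisor)
    have "lyns s (j mod q) = lyn y j" "lyn_factor y j = take (lyn y j) y"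
      using lyn_periodic[OF y S'(1,2) j(2) per] S'(6,7) r by simp_all
    thus ?thesis using S' False per
      unfolding scan_inv_def outer_prepare_def q_def by (auto simp: mod_Suc_eq le_less)
  qed
qed

lemma inner_inv_init:
  fixes y :: "'a::linorder list"
  assumes y: "lyndon y" and j: "0 < j" "j < length y" and O: "outer_inv y (j - 1) s"
  shows "inner_inv y j (outer_prepare y j s) j"
proof -
  define s2 where "s2 = outer_prepare y j s"
  have Sj: "Suc (j - 1) = j" using j by simp
  have O': "scan_inv y (j - 1) s" "length y \<le> fresh s" "created s = [length y..<fresh s]"
    "\<forall>p\<le>j - 1. represents_below s (length y) (fresh s) (root s p) (lyn_tree y p)"
    "set (created s) = (\<Union>p\<in>lyn_stack y j. tree_nodes s (root s p) (lyn_tree y p))"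
    "\<exists>plen iter. creation_log y s plen iter \<and> (\<forall>c<length (created s). iter c \<le> j - 1) \<and>
       plen ` {..<length (created s)} = Suc ` ({0..j - 1} - lyn_stack y j)"
    using O unfolding outer_inv_def Sj by blast+
  have same: "represents_below s2 n F r t \<longleftrightarrow> represents_below s n F r t"
    "tree_nodes s2 r t = tree_nodes s r t" for n F r t
    using represents_below_same_children[of s2 s] tree_nodes_same_children[of s2 s]
    unfolding s2_def by simp_all
  have stack_less: "p < j" if "p \<in> lyn_stack y j" for p using lyn_stack_less[OF that] .
  have singleton: "factor y j (Suc j - j) = [y!j]" using factor_1[OF j(2)] by simp
  obtain plen iter where G: "creation_log y s plen iter" "\<forall>c<length (created s). iter c \<le> j - 1"
      "plen ` {..<length (created s)} = Suc ` ({0..j - 1} - lyn_stack y j)"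
    using O'(6) by blast
  have log_s2: "creation_log y s2 plen iter"
    using G(1) by (subst creation_log_cong) (simp_all add: s2_def)
  have diff: "{0..j} - insert j (lyn_stack y j) = {0..j - 1} - lyn_stack y j" using j by auto
  have stack_nodes: "(\<Union>p\<in>lyn_stack y j. tree_nodes s2 (root s2 p) (lyn_tree y p)) =
      (\<Union>p\<in>lyn_stack y j. tree_nodes s (root s p) (lyn_tree y p))"
  proof (rule SUP_cong[OF refl])
    fix p assume "p \<in> lyn_stack y j"
    hence "root s2 p = root s p" using stack_less unfolding s2_def by fastforce
    thus "tree_nodes s2 (root s2 p) (lyn_tree y p) = tree_nodes s (root s p) (lyn_tree y p)"
      using same(2) by simp
  qed
  have log: "inner_log y j s2 j" unfolding inner_log_def
  proof (intro exI conjI)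
    show "creation_log y s2 plen iter" by (rule log_s2)
    show "\<forall>c<length (created s2). iter c \<le> j \<and> (iter c = j \<longrightarrow> j < plen c)"
    proof (intro allI impI)
      fix c assume "c < length (created s2)"
      hence "iter c \<le> j - 1" using G(2) unfolding s2_def by simp
      thus "iter c \<le> j \<and> (iter c = j \<longrightarrow> j < plen c)" using j by auto
    qed
    show "plen ` {..<length (created s2)} = Suc ` ({0..j} - insert j (lyn_stack y j))"
      using G(3) diff unfolding s2_def by simp
  qed
  have "tree_nodes s2 (root s2 j) (llt_at [y!j] j) = {}" by (simp add: llt_at_singleton)
  hence nodes: "set (created s2) = tree_nodes s2 (root s2 j) (llt_at [y!j] j) \<union>
      (\<Union>p\<in>lyn_stack y j. tree_nodes s2 (root s2 p) (lyn_tree y p))"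
    using O'(5) stack_nodes unfolding s2_def by simp
  have roots: "\<forall>p<j. represents_below s2 (length y) (fresh s2) (root s2 p) (lyn_tree y p)"
  proof (intro allI impI)
    fix p assume "p < j"
    hence "represents_below s (length y) (fresh s) (root s p) (lyn_tree y p)" using O'(4) by simp
    thus "represents_below s2 (length y) (fresh s2) (root s2 p) (lyn_tree y p)"
      using same(1) \<open>p < j\<close> unfolding s2_def by simp
  qed
  show ?thesis
    unfolding inner_inv_def s2_def[symmetric] singleton
    using scan_inv_prepare[OF y j O'(1), folded s2_def] O'(2,3) roots nodes log
      period_break_self[OF y j(2)] lyn_start_le[OF j(2)] j
    by (simp add: s2_def llt_at_singleton lyndon_singleton leaf_below)
qed

lemma inner_loop_inv:
  fixes y :: "'a::linorder list"
  assumes y: "lyndon y" and jn: "j < length y" and init: "inner_inv y j s j"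
  obtains s' where "inner_loop j s = Some s'" "inner_inv y j s' (lyn_start y j)"
proof -
  define P where "P = (\<lambda>(s, l, k). l \<le> Suc j \<and> k = j - l \<and> inner_inv y j s (Suc j - l))"
  define B where "B = (\<lambda>(s::alg_state, l::nat, k::nat). l < lyns s j)"
  have lyns_j: "lyns s j = lyn y j" if "inner_inv y j s b" for s b
    using that unfolding inner_inv_def scan_inv_def by simp
  have lyns_k: "lyns s (j - l) = lyn y (j - l)" if "inner_inv y j s b" for s b l
    using that unfolding inner_inv_def scan_inv_def by simp
  have step: "P (inner_step j st) \<and> lyns (fst (inner_step j st)) j - fst (snd (inner_step j st))
      < lyns (fst st) j - fst (snd st)" if "P st" "B st" for st
  proof -
    obtain s l k where st: "st = (s, l, k)" by (cases st)
    have inv: "inner_inv y j s (Suc j - l)" and kl: "l \<le> Suc j" "k = j - l" "l < lyn y j"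
      using that lyns_j unfolding st P_def B_def by auto
    have cond: "lyn_start y j < Suc j - l" using kl lyn_start_add_lyn[OF jn] by simp
    have kn: "k < length y" using kl jn by simp
    have k_eq: "Suc j - l - 1 = k" using kl by simp
    have new: "inner_inv y j (link s k j) (lyn_start y k)"
      using inner_inv_step[OF y jn inv cond] unfolding k_eq .
    have lk: "lyns s k = lyn y k" using lyns_k inv kl by simp
    have "lyn_start y k + lyn y k = Suc k" by (rule lyn_start_add_lyn[OF kn])
    hence l': "l + lyn y k \<le> Suc j" "Suc j - (l + lyn y k) = lyn_start y k"
      "k - lyn y k = j - (l + lyn y k)" using kl cond by linarith+
    have "lyn y j - (l + lyn y k) < lyn y j - l" using kl lyn_pos[OF kn] by linarith
    thus ?thesis using new lk l' lyns_j[OF inv] unfolding st P_def inner_step_link by simp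
  qed
  have Pstep: "P (inner_step j st)" if "P st" "B st" for st using step[OF that] by blast
  have wf: "wf {(t, st). (P st \<and> B st) \<and> t = inner_step j st}"
  proof (rule wf_subset[OF wf_measure[of "\<lambda>st. lyns (fst st) j - fst (snd st)"]], rule subsetI)
    fix x assume "x \<in> {(t, st). (P st \<and> B st) \<and> t = inner_step j st}"
    then obtain st where "x = (inner_step j st, st)" "P st" "B st" by blast
    thus "x \<in> measure (\<lambda>st. lyns (fst st) j - fst (snd st))" using step by simp
  qed
  have P0: "P (s, 1, j - 1)" using init unfolding P_def by simp
  obtain st where W: "while_option B (inner_step j) (s, 1, j - 1) = Some st"
    using wf_while_option_Some[OF wf Pstep P0] by blast
  obtain s' l k where st: "st = (s', l, k)" by (cases st)
  have "P st" using while_option_rule[where P = P, OF Pstep W P0] .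
  hence inv: "inner_inv y j s' (Suc j - l)" and "l \<le> Suc j" unfolding st P_def by simp_all
  moreover have "\<not> l < lyn y j" using while_option_stop[OF W] lyns_j[OF inv] unfolding st B_def by simp
  moreover have "lyn_start y j \<le> Suc j - l" using inv unfolding inner_inv_def by blast
  ultimately have "Suc j - l = lyn_start y j" using lyn_start_add_lyn[OF jn] by linarith
  moreover have "inner_loop j s = Some s'" unfolding inner_loop_def using W st B_def by simp
  ultimately show ?thesis using that inv by simp
qed

lemma outer_inv_of_inner_inv:
  fixes y :: "'a::linorder list"
  assumes jn: "j < length y" and inv: "inner_inv y j s (lyn_start y j)"
  shows "outer_inv y j s"
proof -
  let ?b = "lyn_start y j"
  have full: "llt_at (factor y ?b (Suc j - ?b)) ?b = lyn_tree y j"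
    unfolding lyn_tree_def using Suc_minus_lyn_start[OF jn] by simp
  have I: "scan_inv y j s" "length y \<le> fresh s" "created s = [length y..<fresh s]"
    "\<forall>p<j. represents_below s (length y) (fresh s) (root s p) (lyn_tree y p)"
    "represents_below s (length y) (fresh s) (root s j) (lyn_tree y j)"
    "set (created s) = tree_nodes s (root s j) (lyn_tree y j) \<union>
       (\<Union>p\<in>lyn_stack y ?b. tree_nodes s (root s p) (lyn_tree y p))"
    "\<exists>plen iter. creation_log y s plen iter \<and>
       (\<forall>c<length (created s). iter c \<le> j \<and> (iter c = j \<longrightarrow> ?b < plen c)) \<and>
       plen ` {..<length (created s)} = Suc ` ({0..j} - insert j (lyn_stack y ?b))"
    using inv unfolding inner_inv_def inner_log_def full by blast+
  have stack: "lyn_stack y (Suc j) = insert j (lyn_stack y ?b)" by (rule lyn_stack_Suc[OF jn])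
  have "\<forall>p\<le>j. represents_below s (length y) (fresh s) (root s p) (lyn_tree y p)"
    using I(4,5) by (auto simp: le_less)
  moreover have "set (created s) = (\<Union>p\<in>lyn_stack y (Suc j). tree_nodes s (root s p) (lyn_tree y p))"
    using I(6) stack by simp
  moreover have "\<exists>plen iter. creation_log y s plen iter \<and> (\<forall>c<length (created s). iter c \<le> j) \<and>
       plen ` {..<length (created s)} = Suc ` ({0..j} - lyn_stack y (Suc j))"
    using I(7) stack by auto
  ultimately show ?thesis using I(1-3) unfolding outer_inv_def by blast
qed

lemma outer_step_inv:
  fixes y :: "'a::linorder list"
  assumes "lyndon y" "0 < j" "j < length y" "outer_inv y (j - 1) s"
  obtains s' where "outer_step y j s = Some s'" "outer_inv y j s'"
  using inner_loop_inv[OF assms(1,3) inner_inv_init[OF assms]] outer_inv_of_inner_inv[OF assms(3)]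
  unfolding outer_step_eq by metis

lemma outer_inv_init:
  fixes y :: "'a::linorder list"
  assumes "lyndon y" "0 < length y"
  shows "outer_inv y 0 (init_state (length y))"
proof -
  have l0: "lyn y 0 = 1" "lyn_start y 0 = 0" using lyn_0[OF assms(2)] by (simp_all add: lyn_start_def)
  have stack: "lyn_stack y (Suc 0) = {0}" using lyn_stack_Suc[OF assms(2)] l0 by simp
  have tree: "lyn_tree y 0 = Leaf 0"
    unfolding lyn_tree_def l0 using factor_1[OF assms(2)] by (simp add: llt_at_singleton)
  have "take 1 y = [y!0]" using assms(2) by (cases y) auto
  hence "lyndon (take 1 y)" by (simp add: lyndon_singleton)
  moreover have "creation_log y (init_state (length y)) id id"
    unfolding creation_log_def by (simp add: init_state_def)
  moreover have "represents_below (init_state (length y)) (length y) (length y) 0 (Leaf 0)"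
    using assms(2) by (rule leaf_below)
  moreover have "scan_inv y 0 (init_state (length y))"
    using l0 \<open>lyndon (take 1 y)\<close> unfolding scan_inv_def
    by (simp add: init_state_def periodic_upto_def factor_0)
  ultimately show ?thesis
    unfolding outer_inv_def using stack tree by (simp add: init_state_def) blast
qed

lemma outer_loop_inv:
  fixes y :: "'a::linorder list"
  assumes "lyndon y" "j < length y"
  shows "\<exists>s. fold (\<lambda>j so. Option.bind so (outer_step y j)) [1..<Suc j] (Some (init_state (length y)))
           = Some s \<and> outer_inv y j s"
  using assms(2)
proof (induction j)
  case 0 thus ?case using outer_inv_init[OF assms(1)] by simp
next
  case (Suc j)
  then obtain s where s: "fold (\<lambda>j so. Option.bind so (outer_step y j)) [1..<Suc j]
      (Some (init_state (length y))) = Some s" "outer_inv y j s" by auto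
  obtain s' where "outer_step y (Suc j) s = Some s'" "outer_inv y (Suc j) s'"
    using outer_step_inv[OF assms(1) _ Suc.prems] s(2) by auto
  thus ?case using s(1) by simp
qed

lemma left_lyndon_tree_alg_inv:
  fixes y :: "'a::linorder list"
  assumes "lyndon y" "0 < length y"
  obtains s where "left_lyndon_tree_alg y = Some s" "outer_inv y (length y - 1) s"
proof -
  have "[1..<length y] = [1..<Suc (length y - 1)]" using assms(2) by simp
  moreover obtain s where "fold (\<lambda>j so. Option.bind so (outer_step y j)) [1..<Suc (length y - 1)]
      (Some (init_state (length y))) = Some s" "outer_inv y (length y - 1) s"
    using outer_loop_inv[OF assms(1), of "length y - 1"] assms(2) by auto
  ultimately show ?thesis using that unfolding left_lyndon_tree_alg_def by simp
qed

lemma outer_inv_last: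
  fixes y :: "'a::linorder list"
  assumes y: "lyndon y" and n: "1 < length y" and inv: "outer_inv y (length y - 1) s"
  shows "represents s (length y) (root s (length y - 1)) (LLT y)"
    "set (created s) = tree_nodes s (root s (length y - 1)) (LLT y)"
    "created s = [length y..<fresh s]"
    "\<exists>plen iter. creation_log y s plen iter \<and> plen ` {..<length (created s)} = {0<..<length y}"
proof -
  define j where "j = length y - 1"
  have jn: "j < length y" "Suc j = length y" using n unfolding j_def by simp_all
  have I: "created s = [length y..<fresh s]"
    "\<forall>p\<le>j. represents_below s (length y) (fresh s) (root s p) (lyn_tree y p)"
    "set (created s) = (\<Union>p\<in>lyn_stack y (Suc j). tree_nodes s (root s p) (lyn_tree y p))"
    "\<exists>plen iter. creation_log y s plen iter \<and> (\<forall>c<length (created s). iter c \<le> j) \<and>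
       plen ` {..<length (created s)} = Suc ` ({0..j} - lyn_stack y (Suc j))"
    using inv unfolding outer_inv_def j_def by blast+
  have lyn: "lyn y j = length y" using y jn by (intro lyn_eqI) (auto simp: factor_0)
  hence start: "lyn_start y j = 0" unfolding lyn_start_def using jn by simp
  have tree: "lyn_tree y j = LLT y" unfolding lyn_tree_def LLT_def using start lyn
    by (simp add: factor_0)
  have stack: "lyn_stack y (Suc j) = {j}" using lyn_stack_Suc[OF jn(1)] start by simp
  have "Suc ` ({0..j} - {j}) = {0<..<length y}"
    using jn by (auto simp: image_iff gr0_conv_Suc)
  thus "\<exists>plen iter. creation_log y s plen iter \<and> plen ` {..<length (created s)} = {0<..<length y}"
    using I(4) stack by auto
  show "represents s (length y) (root s (length y - 1)) (LLT y)"
    using I(2) tree represents_below_represents unfolding j_def by auto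
  show "set (created s) = tree_nodes s (root s (length y - 1)) (LLT y)"
    using I(3) tree stack unfolding j_def by simp
  show "created s = [length y..<fresh s]" by (rule I(1))
qed

lemma assoc_prefix_created:
  fixes y :: "'a::linorder list"
  assumes "creation_log y s plen iter" "created s = [length y..<fresh s]" "c < length (created s)"
  shows "assoc_prefix y s (created s ! c) = take (plen c) y"
proof -
  obtain t where t: "represents_below s (length y) (fresh s) (lchild s (length y + c)) t"
    "rightmost_leaf t = plen c - 1" "0 < plen c"
    using assms(1,3) unfolding creation_log_def by blast
  hence "(THE t. represents s (length y) (lchild s (length y + c)) t) = t"
    using represents_below_represents represents_unique by blast
  thus ?thesis using t assms(2,3) unfolding assoc_prefix_def by simp
qed

lemma creation_log_inf_prec:
  fixes y :: "'a::linorder list"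
  assumes "lyndon y" "creation_log y s plen iter" "c < c'" "c' < length (created s)"
  shows "inf_prec (take (plen c) y) (take (plen c') y)"
proof -
  have "0 < plen c" "plen c \<le> iter c" "iter c < length y" "periodic_upto y (plen c) (iter c)"
      "y!(iter c) \<noteq> y!(iter c mod plen c)"
    "0 < plen c'" "plen c' \<le> iter c'" "iter c' < length y" "periodic_upto y (plen c') (iter c')"
    "iter c < iter c' \<or> (iter c = iter c' \<and> plen c' < plen c)"
    using assms(2-4) unfolding creation_log_def by (meson order.strict_trans)+
  thus ?thesis by (rule inf_prec_take_of_period_breaks[OF assms(1)])
qed

lemma created_assoc_prefixes:
  fixes y :: "'a::linorder list"
  assumes y: "lyndon y" and log: "creation_log y s plen iter" and ids: "created s = [length y..<fresh s]"
    and prefixes: "plen ` {..<length (created s)} = {0<..<length y}"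
  shows "length (created s) = length y - 1"
    "\<forall>i j. i < j \<and> j < length (created s) \<longrightarrow>
       inf_prec (assoc_prefix y s (created s ! i)) (assoc_prefix y s (created s ! j))"
    "(\<lambda>q. assoc_prefix y s q) ` set (created s) = {take m y | m. 0 < m \<and> m < length y}"
proof -
  have assoc: "assoc_prefix y s (created s ! c) = take (plen c) y" if "c < length (created s)" for c
    using assoc_prefix_created[OF log ids that] .
  have order: "inf_prec (take (plen i) y) (take (plen j) y)" if "i < j" "j < length (created s)" for i j
    using creation_log_inf_prec[OF y log that] .
  thus "\<forall>i j. i < j \<and> j < length (created s) \<longrightarrow>
      inf_prec (assoc_prefix y s (created s ! i)) (assoc_prefix y s (created s ! j))"
    using assoc by simp
  have "inj_on plen {..<length (created s)}"
  proof (rule inj_onI, rule ccontr)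
    fix c c' assume "c \<in> {..<length (created s)}" "c' \<in> {..<length (created s)}"
      "plen c = plen c'" "c \<noteq> c'"
    thus False using order[of c c'] order[of c' c] inf_prec_irrefl by (auto simp: neq_iff)
  qed
  hence "length (created s) = card {0<..<length y}" using card_image prefixes by fastforce
  thus "length (created s) = length y - 1" by simp
  have "set (created s) = (\<lambda>c. created s ! c) ` {..<length (created s)}"
    by (auto simp: in_set_conv_nth)
  hence "(\<lambda>q. assoc_prefix y s q) ` set (created s) = (\<lambda>c. take (plen c) y) ` {..<length (created s)}"
    using assoc by (simp add: image_image)
  also have "\<dots> = (\<lambda>m. take m y) ` {0<..<length y}" unfolding prefixes[symmetric] image_image ..
  finally show "(\<lambda>q. assoc_prefix y s q) ` set (created s) = {take m y | m. 0 < m \<and> m < length y}"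
    by auto
qed

theorem theorem6:
  fixes y :: "'a::linorder list"
  assumes "lyndon y" and "length y > 1"
  shows "\<exists>s. left_lyndon_tree_alg y = Some s
           \<and> represents s (length y) (root s (length y - 1)) (LLT y)
           \<and> length (created s) = length y - 1
           \<and> {q. reach s (length y) (root s (length y - 1)) q \<and> length y \<le> q} = set (created s)
           \<and> (\<forall>i j. i < j \<and> j < length (created s) \<longrightarrow>
                 inf_prec (assoc_prefix y s (created s ! i)) (assoc_prefix y s (created s ! j)))
           \<and> (\<lambda>q. assoc_prefix y s q) ` set (created s) = {take m y | m. 0 < m \<and> m < length y}"
proof -
  have "0 < length y" using assms(2) by linarith
  then obtain s where run: "left_lyndon_tree_alg y = Some s" and inv: "outer_inv y (length y - 1) s"
    by (rule left_lyndon_tree_alg_inv[OF assms(1)])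
  note final = outer_inv_last[OF assms inv]
  obtain plen iter where "creation_log y s plen iter" "plen ` {..<length (created s)} = {0<..<length y}"
    using final(4) by blast
  note prefixes = created_assoc_prefixes[OF assms(1) this(1) final(3) this(2)]
  show ?thesis using run final(1,2) reach_eq_tree_nodes[OF final(1)] prefixes by simp
qed

end
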